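(* An element $\mathsf{v} \in \mathfrak A_d$ of degree at most $h$ is $(d, h, N)$-reachable if and only if there is a time-series $x \in (\mathtt{K}^d)^N$ such that $\log_{\bullet_h}\Phi^{*}_H \mathrm{DS}^{\leq h}(x) = \mathsf{v}$.
   Context: $\mathtt{K}$ is an algebraically closed field of characteristic zero, $\mathfrak A_d=\mathtt{K}[X_1,\dots,X_d]/\{\text{constants}\}$ with basis the non-constant monomials (identified with nonempty multisets on $[d]$, graded by degree). Words $\mathsf{e}_1\bullet\cdots\bullet\mathsf{e}_k$ in monomials form a basis of $T(\mathfrak A_d)$, with height $\|w\|_{\mathrm{ht}}$ = sum of degrees and length $|w|=k$; $T((\mathfrak A_d))$ is the space of formal series of words, paired with $T(\mathfrak A_d)$ by $\langle\sum_w\alpha_w w,v\rangle=\alpha_v$; $T^{\le h}$ denotes truncation to height $\le h$, with truncated concatenation $\bullet_h$ and $\log_{\bullet_h}(\mathsf{u})=\sum_{n\ge1}\frac{(-1)^{n-1}}{n}(\mathsf{u}-\varepsilon)^{\bullet_h n}$. For a time-series $x=(x_1,\dots,x_N)\in(\mathtt{K}^d)^N$ (the paper works with the increments directly), the discrete signature $\mathrm{DS}(x)\in T((\mathfrak A_d))$ is $\langle \mathrm{DS}(x),\mathsf{e}_1\bullet\cdots\bullet\mathsf{e}_k\rangle=\sum_{1\le i_1<\cdots<i_k\le N}\mathsf{e}_1(x_{i_1})\cdots\mathsf{e}_k(x_{i_k})$, and $\mathrm{DS}^{\le h}(x)$ is its truncation to height $\le h$. The Hoffman map is $\Phi_H(w)=\sum_{\alpha\in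 C(|w|)}\frac{1}{\alpha!}(w)_\alpha$, summing over compositions $\alpha$ of $|w|$, with $(w)_\alpha$ the word obtained by multiplying consecutive blocks of letters according to $\alpha$ and $\alpha!=\prod\alpha_i!$; its adjoint $\Phi_H^*$ is multiplicative for $\bullet$ with $\Phi_H^*(i)=\sum_{n\ge1}\frac1{n!}\sum_{i_1\cdots i_n=i}i_1\bullet\cdots\bullet i_n$. The Lie bracket is $[\mathsf{a},\mathsf{b}]=\mathsf{a}\bullet_h\mathsf{b}-\mathsf{b}\bullet_h\mathsf{a}$ and Lie polynomials $\mathfrak l_w$ are defined by $\mathfrak l_I=I$ for a monomial $I$ and $\mathfrak l_{\mathsf{e}_1\bullet u}=[\mathsf{e}_1,\mathfrak l_u]$. With the shuffle product $\sqcup\!\sqcup$ (recursively $w\bullet i\ \sqcup\!\sqcup\ v\bullet j=(w\ \sqcup\!\sqcup\ v\bullet j)\bullet i+(w\bullet i\ \sqcup\!\sqcup\ v)\bullet j$, $\varepsilon$ a unit), the deconcatenation coproduct $\delta$ and $\tilde\delta=\delta-\mathrm{id}\otimes1-1\otimes\mathrm{id}$, the shuffle Eulerian map is $e_1^{\sqcup\!\sqcup}=\sum_{n\ge1}\frac{(-1)^{n-1}}{n}(\sqcup\!\sqcup)^{\circ(n-1)}\circ\tilde\delta^{\circ(n-1)}$. An element $\mathsf{v}\in\mathfrak A_d$ of degree $\le h$ is called $(d,h,N)$-reachable if there is $x\in(\mathtt{K}^d)^N$ with $\langle\mathrm{DS}(x),I\rangle=\langle\mathsf{v},I\rangle$ for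 all monomials $I$ of degree $\le h$ and $\langle\mathrm{DS}(x),\Phi_H e_1^{\sqcup\!\sqcup}(\mathfrak l_w)\rangle=0$ for all words $w$ with $\|w\|_{\mathrm{ht}}\le h$ and $|w|\ge2$. *)

theory Defs
  imports "HOL-Library.Multiset" "HOL-Computational_Algebra.Polynomial"
begin

text \<open>A letter (basis element of A_d) is a non-constant monomial, i.e. a nonempty
multiset of variable indices; a word is a list of letters. Elements of
T((A_d)) (and polynomials in T(A_d)) are coefficient functions on words.\<close>

type_synonym letter = "nat multiset"
type_synonym word = "nat multiset list"
type_synonym 'k ser = "word \<Rightarrow> 'k"

definition is_letter :: "nat \<Rightarrow> letter \<Rightarrow> bool" where
  "is_letter d I \<longleftrightarrow> I \<noteq> {#} \<and> set_mset I \<subseteq> {..<d}"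

definition is_word :: "nat \<Rightarrow> word \<Rightarrow> bool" where
  "is_word d w \<longleftrightarrow> (\<forall>I\<in>set w. is_letter d I)"

definition ht :: "word \<Rightarrow> nat" where
  "ht w = sum_list (map size w)"

text \<open>v is an element of A_d of degree at most h (embedded as combination of one-letter words).\<close>
definition in_Ad_deg :: "nat \<Rightarrow> nat \<Rightarrow> 'k::zero ser \<Rightarrow> bool" where
  "in_Ad_deg d h v \<longleftrightarrow> (\<forall>u. v u \<noteq> 0 \<longrightarrow> (\<exists>I. u = [I] \<and> is_letter d I \<and> size I \<le> h))"

definition wordp :: "word \<Rightarrow> 'k::{zero,one} ser" where
  "wordp w = (\<lambda>u. if u = w then 1 else 0)"

definition unit_ser :: "'k::{zero,one} ser" where
  "unit_ser = wordp []"

definition pair :: "'k::comm_ring_1 ser \<Rightarrow> 'k ser \<Rightarrow> 'k" where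
  "pair S p = (\<Sum>u\<in>{u. p u \<noteq> 0}. S u * p u)"

definition lin :: "(word \<Rightarrow> 'k::comm_ring_1 ser) \<Rightarrow> 'k ser \<Rightarrow> 'k ser" where
  "lin f p = (\<lambda>u. \<Sum>w\<in>{w. p w \<noteq> 0}. p w * f w u)"

definition trunc :: "nat \<Rightarrow> 'k::zero ser \<Rightarrow> 'k ser" where
  "trunc h a = (\<lambda>w. if ht w \<le> h then a w else 0)"

definition conc_h :: "nat \<Rightarrow> 'k::comm_ring_1 ser \<Rightarrow> 'k ser \<Rightarrow> 'k ser" where
  "conc_h h a b = (\<lambda>w. if ht w \<le> h then (\<Sum>k\<le>length w. a (take k w) * b (drop k w)) else 0)"

fun pow_h :: "nat \<Rightarrow> nat \<Rightarrow> 'k::comm_ring_1 ser \<Rightarrow> 'k ser" where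
  "pow_h h 0 a = trunc h unit_ser"
| "pow_h h (Suc n) a = conc_h h a (pow_h h n a)"

text \<open>log_{\<bullet>_h}(u) = sum_{n>=1} (-1)^(n-1)/n (u - eps)^{\<bullet>_h n}; on T^{<=h} the terms
with n > h vanish (u has eps-coefficient 1), so the sum is finite.\<close>
definition logh :: "nat \<Rightarrow> 'k::field ser \<Rightarrow> 'k ser" where
  "logh h u = (\<lambda>w. \<Sum>n\<in>{1..h}. ((-1) ^ (n - 1) / of_nat n) * pow_h h n (\<lambda>z. u z - unit_ser z) w)"

definition evalm :: "letter \<Rightarrow> (nat \<Rightarrow> 'k::comm_ring_1) \<Rightarrow> 'k" where
  "evalm I y = prod_mset (image_mset y I)"

text \<open>x i j is the j-th coordinate of the i-th point (i < N, j < d).\<close>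
definition DS :: "nat \<Rightarrow> (nat \<Rightarrow> nat \<Rightarrow> 'k::comm_ring_1) \<Rightarrow> 'k ser" where
  "DS N x w = (\<Sum>S\<in>{S. S \<subseteq> {0..<N} \<and> card S = length w}.
       \<Prod>j<length w. evalm (w ! j) (x (sorted_list_of_set S ! j)))"

definition comps :: "nat \<Rightarrow> nat list set" where
  "comps n = {\<alpha>. sum_list \<alpha> = n \<and> (\<forall>a\<in>set \<alpha>. 0 < a)}"

fun contract :: "nat list \<Rightarrow> word \<Rightarrow> word" where
  "contract [] w = []"
| "contract (a # \<alpha>) w = sum_list (take a w) # contract \<alpha> (drop a w)"

definition hoffman :: "word \<Rightarrow> 'k::field_char_0 ser" where
  "hoffman w = (\<lambda>u. \<Sum>\<alpha>\<in>comps (length w).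
      if contract \<alpha> w = u then 1 / of_nat (prod_list (map fact \<alpha>)) else 0)"

definition hoffman_adj :: "'k::field_char_0 ser \<Rightarrow> 'k ser" where
  "hoffman_adj S = (\<lambda>w. pair S (hoffman w))"

definition bracket :: "nat \<Rightarrow> 'k::comm_ring_1 ser \<Rightarrow> 'k ser \<Rightarrow> 'k ser" where
  "bracket h a b = (\<lambda>w. conc_h h a b w - conc_h h b a w)"

fun lie :: "nat \<Rightarrow> word \<Rightarrow> 'k::comm_ring_1 ser" where
  "lie h [] = (\<lambda>_. 0)"
| "lie h [I] = wordp [I]"
| "lie h (e # e' # u) = bracket h (wordp [e]) (lie h (e' # u))"

text \<open>Shuffle of words, as a list of words with multiplicity, via the recursion
w.i sh v.j = (w sh v.j).i + (w.i sh v).j (implemented on reversed words).\<close>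
fun shuf_rev :: "word \<Rightarrow> word \<Rightarrow> word list" where
  "shuf_rev [] v = [v]"
| "shuf_rev w [] = [w]"
| "shuf_rev (i # w) (j # v) = map (Cons i) (shuf_rev w (j # v)) @ map (Cons j) (shuf_rev (i # w) v)"

definition shuffle_w :: "word \<Rightarrow> word \<Rightarrow> 'k::comm_ring_1 ser" where
  "shuffle_w u v = (\<lambda>z. of_nat (count_list (map rev (shuf_rev (rev u) (rev v))) z))"

definition shuffle_p :: "'k::comm_ring_1 ser \<Rightarrow> 'k ser \<Rightarrow> 'k ser" where
  "shuffle_p p q = (\<lambda>z. \<Sum>u\<in>{u. p u \<noteq> 0}. \<Sum>v\<in>{v. q v \<noteq> 0}. p u * q v * shuffle_w u v z)"

fun shuffle_list :: "word list \<Rightarrow> 'k::comm_ring_1 ser" where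
  "shuffle_list [] = unit_ser"
| "shuffle_list (u # us) = shuffle_p (wordp u) (shuffle_list us)"

text \<open>Iterated reduced coproduct: decompositions into n nonempty consecutive factors.\<close>
definition decomps :: "nat \<Rightarrow> word \<Rightarrow> word list set" where
  "decomps n w = {ps. length ps = n \<and> concat ps = w \<and> (\<forall>p\<in>set ps. p \<noteq> [])}"

definition euler_w :: "word \<Rightarrow> 'k::field_char_0 ser" where
  "euler_w w = (\<lambda>z. \<Sum>n\<in>{1..length w}. ((-1) ^ (n - 1) / of_nat n) *
       (\<Sum>ps\<in>decomps n w. shuffle_list ps z))"

definition reachable :: "nat \<Rightarrow> nat \<Rightarrow> nat \<Rightarrow> 'k::field_char_0 ser \<Rightarrow> bool" where
  "reachable d h N v \<longleftrightarrow> (\<exists>x.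
     (\<forall>I. is_letter d I \<and> size I \<le> h \<longrightarrow> DS N x [I] = v [I]) \<and>
     (\<forall>w. is_word d w \<and> ht w \<le> h \<and> 2 \<le> length w \<longrightarrow>
        pair (DS N x) (lin hoffman (lin euler_w (lie h w))) = 0))"

end

theory Submission
  imports Defs "HOL-Combinatorics.Multiset_Permutations"
begin

text \<open>
Via the Hoffman adjoint, the discrete signature of \<open>x\<close> becomes the product
\<open>S = exp x\<^sub>1 \<cdot> \<dots> \<cdot> exp x\<^sub>N\<close> of the exponentials of the increments, a character of the
shuffle algebra; pairing with the Eulerian idempotent evaluates \<open>log S\<close>, and on words of height
at most \<open>h\<close> the truncations do not interfere. So both sides are statements about \<open>L = log S\<close>.

Being the logarithm of a character, \<open>L\<close> vanishes on shuffles of nonempty words, and for such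
functionals the dual Dynkin-Specht-Wever identity \<open>\<Sum>\<^sub>u \<langle>\<ll>\<^sub>u, z\<rangle> L u = |z| L z\<close> holds.
Hence \<open>|w| \<Sum>\<^sub>z (L z)\<^sup>2 = \<Sum>\<^sub>u L u \<langle>L, \<ll>\<^sub>u\<rangle>\<close>, the sums running over the rearrangements of
\<open>w\<close>: over \<open>\<rat>\<close>, \<open>L\<close> annihilates the Lie polynomials of a multidegree iff it vanishes
there, and a \<open>\<rat>\<close>-linear projection extends this to any field of characteristic zero.
Reachability thus says exactly that \<open>L\<close> agrees with \<open>v\<close> on letters and vanishes on longer words.
\<close>

fun shuffle_mset :: "'a list \<Rightarrow> 'a list \<Rightarrow> 'a list multiset" where
  "shuffle_mset [] v = {#v#}"
| "shuffle_mset u [] = {#u#}"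
| "shuffle_mset (a # u) (b # v) =
     image_mset (Cons a) (shuffle_mset u (b # v)) + image_mset (Cons b) (shuffle_mset (a # u) v)"

lemma shuffle_mset_Nil_right [simp]: "shuffle_mset u [] = {#u#}"
  by (cases u) auto

lemma mset_shuf_rev: "mset (shuf_rev u v) = shuffle_mset u v"
  by (induction u v rule: shuf_rev.induct) (auto simp: mset_map)

lemma shuffle_mset_commute: "shuffle_mset u v = shuffle_mset v u"
  by (induction u v rule: shuffle_mset.induct) (auto simp: add.commute)

lemma mset_in_shuffle_mset: "z \<in># shuffle_mset u v \<Longrightarrow> mset z = mset u + mset v"
  by (induction u v arbitrary: z rule: shuffle_mset.induct) auto

lemma length_in_shuffle_mset: "z \<in># shuffle_mset u v \<Longrightarrow> length z = length u + length v"
  by (metis mset_in_shuffle_mset size_mset size_union)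

lemma size_shuffle_mset: "size (shuffle_mset u v) = (length u + length v) choose length u"
  by (induction u v rule: shuffle_mset.induct) auto

lemma count_image_mset_Cons:
  "count (image_mset (Cons a) M) w = (if w \<noteq> [] \<and> hd w = a then count M (tl w) else 0)"
  by (induction M) auto

lemma count_image_mset_snoc:
  "count (image_mset (\<lambda>z. z @ [a]) M) w = (if w \<noteq> [] \<and> last w = a then count M (butlast w) else 0)"
  by (induction M) auto

lemma count_shuffle_mset_Nil: "count (shuffle_mset p q) [] = (if p = [] \<and> q = [] then 1 else 0)"
  by (cases p; cases q) (auto simp: count_image_mset_Cons)

lemma count_shuffle_mset_Cons:
  "count (shuffle_mset p q) (a # w) =
     (if p \<noteq> [] \<and> hd p = a then count (shuffle_mset (tl p) q) w else 0) +
     (if q \<noteq> [] \<and> hd q = a then count (shuffle_mset p (tl q)) w else 0)"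
  by (cases p; cases q) (auto simp: count_image_mset_Cons)

lemma shuffle_mset_singleton_snoc:
  "shuffle_mset [a] (v @ [b]) = {#v @ [b, a]#} + image_mset (\<lambda>z. z @ [b]) (shuffle_mset [a] v)"
  by (induction v) (simp_all add: multiset.map_comp comp_def add_ac)

lemma shuffle_mset_snoc:
  "shuffle_mset (u @ [a]) (v @ [b]) =
     image_mset (\<lambda>z. z @ [a]) (shuffle_mset u (v @ [b])) +
     image_mset (\<lambda>z. z @ [b]) (shuffle_mset (u @ [a]) v)"
proof (induction "length u + length v" arbitrary: u v rule: less_induct)
  case less
  show ?case
  proof (cases u)
    case Nil
    then show ?thesis by (simp add: shuffle_mset_singleton_snoc)
  next
    case u: (Cons c u')
    show ?thesis
    proof (cases v)
      case Nil
      then show ?thesis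
        by (simp add: shuffle_mset_commute[of "u @ [a]"] shuffle_mset_commute[of "[b]"]
            shuffle_mset_singleton_snoc add_ac)
    next
      case v: (Cons d v')
      have "shuffle_mset (u' @ [a]) (v @ [b]) =
          image_mset (\<lambda>z. z @ [a]) (shuffle_mset u' (v @ [b])) +
          image_mset (\<lambda>z. z @ [b]) (shuffle_mset (u' @ [a]) v)"
       and "shuffle_mset (u @ [a]) (v' @ [b]) =
          image_mset (\<lambda>z. z @ [a]) (shuffle_mset u (v' @ [b])) +
          image_mset (\<lambda>z. z @ [b]) (shuffle_mset (u @ [a]) v')"
        by (rule less.hyps; simp add: u v)+
      then show ?thesis
        using u v by (simp add: multiset.map_comp comp_def add_ac)
    qed
  qed
qed

lemma image_mset_rev_shuffle_mset: "image_mset rev (shuffle_mset (rev u) (rev v)) = shuffle_mset u v"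
proof (induction "length u + length v" arbitrary: u v rule: less_induct)
  case less
  show ?case
  proof (cases u rule: rev_cases)
    case u: (snoc u' a)
    show ?thesis
    proof (cases v rule: rev_cases)
      case v: (snoc v' b)
      have IH1: "image_mset rev (shuffle_mset (rev u') (rev v)) = shuffle_mset u' v"
        by (rule less.hyps) (simp add: u)
      have IH2: "image_mset rev (shuffle_mset (rev u) (rev v')) = shuffle_mset u v'"
        by (rule less.hyps) (simp add: v)
      have "image_mset rev (shuffle_mset (rev u) (rev v)) =
          image_mset (\<lambda>z. z @ [a]) (image_mset rev (shuffle_mset (rev u') (rev v))) +
          image_mset (\<lambda>z. z @ [b]) (image_mset rev (shuffle_mset (rev u) (rev v')))"
        using u v by (simp add: multiset.map_comp comp_def)
      also have "\<dots> = shuffle_mset u v"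
        unfolding IH1 IH2 using u v by (simp add: shuffle_mset_snoc)
      finally show ?thesis .
    qed simp
  qed simp
qed

lemma shuffle_w_eq_count: "shuffle_w u v z = of_nat (count (shuffle_mset u v) z)"
  by (simp add: shuffle_w_def mset_map mset_shuf_rev image_mset_rev_shuffle_mset flip: count_mset)

lemma count_shuffle_mset_snoc:
  "count (shuffle_mset p q) (w @ [a]) =
     (if p \<noteq> [] \<and> last p = a then count (shuffle_mset (butlast p) q) w else 0) +
     (if q \<noteq> [] \<and> last q = a then count (shuffle_mset p (butlast q)) w else 0)"
  by (cases p rule: rev_cases; cases q rule: rev_cases)
    (auto simp: shuffle_mset_snoc count_image_mset_snoc)

section \<open>Shuffle characters and the concatenation product\<close>

definition shuffle_eval :: "('a list \<Rightarrow> 'k::comm_ring_1) \<Rightarrow> 'a list \<Rightarrow> 'a list \<Rightarrow> 'k" where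
  "shuffle_eval A u v = (\<Sum>z\<in>#shuffle_mset u v. A z)"

definition conc :: "('a list \<Rightarrow> 'k::comm_ring_1) \<Rightarrow> ('a list \<Rightarrow> 'k) \<Rightarrow> 'a list \<Rightarrow> 'k" where
  "conc A B w = (\<Sum>i\<le>length w. A (take i w) * B (drop i w))"

definition eps :: "'a list \<Rightarrow> 'k::comm_ring_1" where
  "eps w = (if w = [] then 1 else 0)"

fun conc_pow :: "nat \<Rightarrow> ('a list \<Rightarrow> 'k::comm_ring_1) \<Rightarrow> 'a list \<Rightarrow> 'k" where
  "conc_pow 0 A = eps"
| "conc_pow (Suc n) A = conc A (conc_pow n A)"

definition shuffle_character :: "('a list \<Rightarrow> 'k::comm_ring_1) \<Rightarrow> bool" where
  "shuffle_character A \<longleftrightarrow> A [] = 1 \<and> (\<forall>u v. shuffle_eval A u v = A u * A v)"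

lemma shuffle_eval_Nil_left [simp]: "shuffle_eval A [] v = A v"
  and shuffle_eval_Nil_right [simp]: "shuffle_eval A u [] = A u"
  by (simp_all add: shuffle_eval_def)

lemma shuffle_eval_Cons_Cons:
  "shuffle_eval A (a # u) (b # v) =
     shuffle_eval (\<lambda>z. A (a # z)) u (b # v) + shuffle_eval (\<lambda>z. A (b # z)) (a # u) v"
  by (simp add: shuffle_eval_def multiset.map_comp comp_def)

lemma shuffle_eval_affine:
  "shuffle_eval (\<lambda>z. c * F z + G z) u v = c * shuffle_eval F u v + shuffle_eval G u v"
  by (simp add: shuffle_eval_def sum_mset.distrib sum_mset_distrib_left)

lemma conc_Nil [simp]: "conc A B [] = A [] * B []"
  by (simp add: conc_def)

lemma conc_Cons: "conc A B (a # z) = A [] * B (a # z) + conc (\<lambda>p. A (a # p)) B z"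
  unfolding conc_def by (simp add: sum.atMost_Suc_shift del: sum.atMost_Suc)

lemma conc_eps_left [simp]: "conc eps B = B"
  by (rule ext) (simp add: conc_def eps_def sum.atMost_shift del: sum.atMost_Suc)

lemma sum_grid_split:
  fixes T Ia Ib :: "nat \<Rightarrow> nat \<Rightarrow> 'k::comm_monoid_add"
  assumes "\<And>j. T 0 (Suc j) = Ib 0 j" and "\<And>i. T (Suc i) 0 = Ia i 0"
    and "\<And>i j. T (Suc i) (Suc j) = Ia i (Suc j) + Ib (Suc i) j"
  shows "(\<Sum>i\<le>Suc m. \<Sum>j\<le>Suc n. T i j) =
    T 0 0 + (\<Sum>i\<le>m. \<Sum>j\<le>Suc n. Ia i j) + (\<Sum>i\<le>Suc m. \<Sum>j\<le>n. Ib i j)"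
  using assms
  by (simp add: sum.atMost_Suc_shift sum.distrib add_ac del: sum.atMost_Suc)

text \<open>Deconcatenation is a morphism for the shuffle product.\<close>
lemma shuffle_eval_conc:
  "shuffle_eval (conc A B) u v = (\<Sum>i\<le>length u. \<Sum>j\<le>length v.
      shuffle_eval A (take i u) (take j v) * shuffle_eval B (drop i u) (drop j v))"
proof (induction u v arbitrary: A B rule: shuffle_mset.induct)
  case (3 a u b v)
  let ?Aa = "\<lambda>p. A (a # p)" and ?Ab = "\<lambda>p. A (b # p)"
  define T where "T i j = shuffle_eval A (take i (a # u)) (take j (b # v)) *
    shuffle_eval B (drop i (a # u)) (drop j (b # v))" for i j
  define Ia where "Ia i j = shuffle_eval ?Aa (take i u) (take j (b # v)) *
    shuffle_eval B (drop i u) (drop j (b # v))" for i j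
  define Ib where "Ib i j = shuffle_eval ?Ab (take i (a # u)) (take j v) *
    shuffle_eval B (drop i (a # u)) (drop j v)" for i j
  have "shuffle_eval (conc A B) (a # u) (b # v) =
      T 0 0 + shuffle_eval (conc ?Aa B) u (b # v) + shuffle_eval (conc ?Ab B) (a # u) v"
    by (simp add: T_def shuffle_eval_Cons_Cons conc_Cons shuffle_eval_affine algebra_simps)
  also have "\<dots> = T 0 0 + (\<Sum>i\<le>length u. \<Sum>j\<le>Suc (length v). Ia i j) +
      (\<Sum>i\<le>Suc (length u). \<Sum>j\<le>length v. Ib i j)"
    by (simp add: "3.IH" Ia_def Ib_def)
  also have "\<dots> = (\<Sum>i\<le>Suc (length u). \<Sum>j\<le>Suc (length v). T i j)"
    by (rule sym, rule sum_grid_split)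
      (simp_all add: T_def Ia_def Ib_def shuffle_eval_Cons_Cons distrib_right)
  finally show ?case by (simp add: T_def)
qed (simp_all add: conc_def)

lemma shuffle_character_conc:
  assumes "shuffle_character A" "shuffle_character B"
  shows "shuffle_character (conc A B)"
proof -
  have "shuffle_eval (conc A B) u v = conc A B u * conc A B v" for u v
    using assms
    by (simp add: shuffle_character_def shuffle_eval_conc conc_def sum_product mult_ac)
  then show ?thesis
    using assms by (simp add: shuffle_character_def)
qed

lemma shuffle_character_eps: "shuffle_character (eps :: 'a list \<Rightarrow> 'k::comm_ring_1)"
proof -
  have "shuffle_eval eps u v = (eps u * eps v :: 'k)" for u v :: "'a list"
  proof (cases "u = [] \<and> v = []")
    case False
    then have "\<forall>z\<in>#shuffle_mset u v. z \<noteq> []"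
      by (auto dest: length_in_shuffle_mset)
    then show ?thesis
      using False by (auto simp: shuffle_eval_def eps_def intro!: sum_mset.neutral)
  qed (simp add: eps_def)
  then show ?thesis
    by (simp add: shuffle_character_def) (simp add: eps_def)
qed

lemma shuffle_character_conc_pow: "shuffle_character A \<Longrightarrow> shuffle_character (conc_pow n A)"
  by (induction n) (simp_all add: shuffle_character_eps shuffle_character_conc)

section \<open>The discrete signature as a product of exponentials\<close>

text \<open>The exponential of the increment \<open>y\<close>; letters are monomials, evaluated at \<open>y\<close>.\<close>
definition exp_ser :: "(nat \<Rightarrow> 'k::field_char_0) \<Rightarrow> word \<Rightarrow> 'k" where
  "exp_ser y w = evalm (sum_list w) y / fact (length w)"

fun exp_prod :: "(nat \<Rightarrow> nat \<Rightarrow> 'k::field_char_0) \<Rightarrow> nat \<Rightarrow> word \<Rightarrow> 'k" where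
  "exp_prod x 0 = eps"
| "exp_prod x (Suc N) = conc (exp_prod x N) (exp_ser (x N))"

lemma evalm_add: "evalm (A + B) y = evalm A y * evalm B y"
  by (simp add: evalm_def)

lemma sum_mset_image_const:
  "(\<And>z. z \<in># M \<Longrightarrow> f z = c) \<Longrightarrow> (\<Sum>z\<in>#M. f z) = of_nat (size M) * c"
  by (induction M) (auto simp: algebra_simps)

lemma shuffle_character_exp_ser: "shuffle_character (exp_ser y)"
  unfolding shuffle_character_def
proof (intro conjI allI)
  fix u v :: word
  have "shuffle_eval (exp_ser y) u v = of_nat (size (shuffle_mset u v)) *
     (evalm (sum_list u + sum_list v) y / fact (length u + length v))"
    unfolding shuffle_eval_def
  proof (rule sum_mset_image_const)
    fix z assume z: "z \<in># shuffle_mset u v"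
    then have "sum_list z = sum_list u + sum_list v"
      by (metis mset_in_shuffle_mset mset_append sum_mset_sum_list sum_list_append)
    moreover have "length z = length u + length v"
      using z by (rule length_in_shuffle_mset)
    ultimately show "exp_ser y z = evalm (sum_list u + sum_list v) y / fact (length u + length v)"
      by (simp add: exp_ser_def)
  qed
  also have "\<dots> = exp_ser y u * exp_ser y v"
    by (simp add: size_shuffle_mset binomial_fact exp_ser_def evalm_add field_simps)
  finally show "shuffle_eval (exp_ser y) u v = exp_ser y u * exp_ser y v" .
qed (simp add: exp_ser_def evalm_def)

lemma shuffle_character_exp_prod: "shuffle_character (exp_prod x N)"
  by (induction N) (simp_all add: shuffle_character_eps shuffle_character_conc shuffle_character_exp_ser)

lemma exp_prod_Nil [simp]: "exp_prod x N [] = 1"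
  using shuffle_character_exp_prod[of x N] by (simp add: shuffle_character_def)

lemma subsets_card_Suc_insert:
  assumes "finite A" "a \<notin> A"
  shows "{S. S \<subseteq> insert a A \<and> card S = Suc k} =
    {S. S \<subseteq> A \<and> card S = Suc k} \<union> insert a ` {S. S \<subseteq> A \<and> card S = k}"
proof (intro equalityI subsetI)
  fix S assume S: "S \<in> {S. S \<subseteq> insert a A \<and> card S = Suc k}"
  show "S \<in> {S. S \<subseteq> A \<and> card S = Suc k} \<union> insert a ` {S. S \<subseteq> A \<and> card S = k}"
  proof (cases "a \<in> S")
    case True
    then have "S = insert a (S - {a})" "S - {a} \<in> {S. S \<subseteq> A \<and> card S = k}"
      using S assms by (auto dest: finite_subset)
    then show ?thesis by blast
  qed (use S in auto)
next
  fix S assume "S \<in> {S. S \<subseteq> A \<and> card S = Suc k} \<union> insert a ` {S. S \<subseteq> A \<and> card S = k}"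
  then consider "S \<subseteq> A" "card S = Suc k" | T where "S = insert a T" "T \<subseteq> A" "card T = k"
    by blast
  then show "S \<in> {S. S \<subseteq> insert a A \<and> card S = Suc k}"
  proof cases
    case 2
    moreover have "finite T" "a \<notin> T"
      using 2 assms by (auto intro: finite_subset)
    ultimately show ?thesis by auto
  qed auto
qed

lemma sorted_list_of_set_insert_Max:
  assumes "finite S" "\<forall>s\<in>S. s < N"
  shows "sorted_list_of_set (insert N S) = sorted_list_of_set S @ [N]"
  using assms
  by (intro sorted_list_of_set_unique[THEN iffD1])
    (auto simp: sorted_wrt_append card_insert_if)

lemma DS_Nil [simp]: "DS N x [] = 1"
proof -
  have "{S. S \<subseteq> {0..<N} \<and> card S = 0} = {{}}"
    by (auto dest: finite_subset)
  then show ?thesis by (simp add: DS_def)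
qed

lemma DS_0: "DS 0 x w = eps w"
proof (cases w)
  case (Cons a u)
  then have "{S. S \<subseteq> {0..<0::nat} \<and> card S = length w} = {}"
    by auto
  then show ?thesis
    by (simp only: DS_def) (simp add: eps_def Cons)
qed (simp add: eps_def)

lemma DS_Suc_snoc: "DS (Suc N) x (w @ [a]) = DS N x (w @ [a]) + DS N x w * evalm a (x N)"
proof -
  let ?f = "\<lambda>w S. \<Prod>j<length w. evalm (w ! j) (x (sorted_list_of_set S ! j))"
  define A where "A = {S. S \<subseteq> {0..<N} \<and> card S = Suc (length w)}"
  define B where "B = {S. S \<subseteq> {0..<N} \<and> card S = length w}"
  have N: "N \<notin> S" if "S \<in> A \<or> S \<in> B" for S
    using that by (auto simp: A_def B_def)
  have "{S. S \<subseteq> {0..<Suc N} \<and> card S = Suc (length w)} = A \<union> insert N ` B"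
    unfolding A_def B_def atLeast0_lessThan_Suc by (rule subsets_card_Suc_insert) simp_all
  moreover have "A \<inter> insert N ` B = {}"
    using N by blast
  ultimately have "DS (Suc N) x (w @ [a]) = sum (?f (w @ [a])) A + sum (?f (w @ [a])) (insert N ` B)"
    unfolding DS_def by (simp add: sum.union_disjoint A_def B_def)
  moreover have "inj_on (insert N) B"
    by (rule inj_onI) (metis N insert_ident)
  moreover have "?f (w @ [a]) (insert N S) = ?f w S * evalm a (x N)" if "S \<in> B" for S
  proof -
    have "finite S" "\<forall>s\<in>S. s < N"
      using that by (auto simp: B_def intro: finite_subset)
    then have "sorted_list_of_set (insert N S) = sorted_list_of_set S @ [N]"
      by (rule sorted_list_of_set_insert_Max)
    moreover have "length (sorted_list_of_set S) = length w"
      using that by (simp add: B_def)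
    ultimately show ?thesis
      by (simp add: nth_append)
  qed
  ultimately show ?thesis
    by (simp add: sum.reindex DS_def A_def B_def sum_distrib_right)
qed

lemma finite_comps: "finite (comps n)"
proof (rule finite_subset)
  show "comps n \<subseteq> {xs. set xs \<subseteq> {0..n} \<and> length xs \<le> n}"
  proof
    fix \<alpha> assume "\<alpha> \<in> comps n"
    then have "sum_list \<alpha> = n" "\<forall>a\<in>set \<alpha>. 0 < a"
      by (simp_all add: comps_def)
    moreover have "length \<alpha> \<le> sum_list \<alpha>" if "\<forall>a\<in>set \<alpha>. 0 < a"
      using that by (induction \<alpha>) auto
    ultimately show "\<alpha> \<in> {xs. set xs \<subseteq> {0..n} \<and> length xs \<le> n}"
      by (auto simp: member_le_sum_list)
  qed
qed (simp add: finite_lists_length_le)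

lemma comps_0 [simp]: "comps 0 = {[]}"
  by (auto simp: comps_def) (metis neq0_conv list.set_intros(1) list.exhaust sum_list_eq_0_iff)

lemma comps_eq_image_snoc:
  assumes "0 < n"
  shows "comps n = (\<lambda>(i, \<beta>). \<beta> @ [n - i]) ` (SIGMA i:{..<n}. comps i)"
proof (intro equalityI subsetI)
  fix \<alpha> assume "\<alpha> \<in> comps n"
  with assms obtain \<beta> m where \<alpha>: "\<alpha> = \<beta> @ [m]"
    by (cases \<alpha> rule: rev_cases) (auto simp: comps_def)
  with \<open>\<alpha> \<in> comps n\<close> have "sum_list \<beta> + m = n" "0 < m" "\<forall>a\<in>set \<beta>. 0 < a"
    by (auto simp: comps_def)
  then show "\<alpha> \<in> (\<lambda>(i, \<beta>). \<beta> @ [n - i]) ` (SIGMA i:{..<n}. comps i)"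
    using \<alpha> by (auto simp: comps_def intro!: image_eqI[of _ _ "(sum_list \<beta>, \<beta>)"])
qed (auto simp: comps_def)

lemma comps_1: "comps (Suc 0) = {[Suc 0]}"
proof -
  have "(SIGMA i:{..<Suc 0}. comps i) = {(0, [])}"
    by auto
  then show ?thesis
    by (simp add: comps_eq_image_snoc)
qed

lemma sum_comps_snoc:
  assumes "0 < n"
  shows "(\<Sum>\<alpha>\<in>comps n. f \<alpha>) = (\<Sum>i<n. \<Sum>\<beta>\<in>comps i. f (\<beta> @ [n - i]))"
proof -
  have "inj_on (\<lambda>(i, \<beta>). \<beta> @ [n - i]) (SIGMA i:{..<n}. comps i)"
    by (rule inj_onI) auto
  then show ?thesis
    by (simp add: comps_eq_image_snoc[OF assms] sum.reindex sum.Sigma finite_comps split_def)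
qed

lemma contract_append: "contract (\<alpha> @ \<beta>) w = contract \<alpha> w @ contract \<beta> (drop (sum_list \<alpha>) w)"
  by (induction \<alpha> arbitrary: w) (auto simp: add.commute)

lemma contract_take: "contract \<alpha> (take (sum_list \<alpha>) w) = contract \<alpha> w"
proof (induction \<alpha> arbitrary: w)
  case (Cons a \<alpha>)
  have "drop a (take (a + sum_list \<alpha>) w) = take (sum_list \<alpha>) (drop a w)"
    by (simp add: drop_take)
  then show ?case
    using Cons.IH[of "drop a w"] by simp
qed simp

lemma length_contract [simp]: "length (contract \<alpha> w) = length \<alpha>"
  by (induction \<alpha> arbitrary: w) auto

lemma ht_append [simp]: "ht (u @ v) = ht u + ht v"
  by (simp add: ht_def)

lemma size_sum_list: "size (sum_list ms) = sum_list (map size (ms :: 'a multiset list))"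
  by (induction ms) auto

lemma ht_contract: "ht (contract \<alpha> w) = ht (take (sum_list \<alpha>) w)"
proof (induction \<alpha> arbitrary: w)
  case (Cons a \<alpha>)
  then show ?case
    by (simp add: take_add ht_def size_sum_list)
qed (simp add: ht_def)

lemma hoffman_adj_eq_sum_comps:
  "hoffman_adj S w = (\<Sum>\<alpha>\<in>comps (length w). S (contract \<alpha> w) / of_nat (prod_list (map fact \<alpha>)))"
proof -
  let ?C = "comps (length w)"
  let ?F = "(\<lambda>\<alpha>. contract \<alpha> w) ` ?C"
  let ?c = "\<lambda>\<alpha>. 1 / of_nat (prod_list (map fact \<alpha>))"
  have "{u. hoffman w u \<noteq> 0} \<subseteq> ?F"
    by (auto simp: hoffman_def elim!: sum.not_neutral_contains_not_neutral split: if_splits)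
  then have "hoffman_adj S w = (\<Sum>u\<in>?F. S u * hoffman w u)"
    unfolding hoffman_adj_def pair_def by (intro sum.mono_neutral_left) (auto simp: finite_comps)
  also have "\<dots> = (\<Sum>\<alpha>\<in>?C. \<Sum>u\<in>?F. if u = contract \<alpha> w then S u * ?c \<alpha> else 0)"
    unfolding hoffman_def sum_distrib_left by (subst sum.swap) (auto intro!: sum.cong)
  also have "\<dots> = (\<Sum>\<alpha>\<in>?C. S (contract \<alpha> w) * ?c \<alpha>)"
    by (simp add: finite_comps)
  finally show ?thesis by simp
qed

lemma hoffman_adj_trunc:
  assumes "ht w \<le> h"
  shows "hoffman_adj (trunc h S) w = hoffman_adj S w"
  using assms by (simp add: hoffman_adj_eq_sum_comps trunc_def ht_contract comps_def)

lemma DS_contract_snoc: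
  assumes "\<beta> \<in> comps i" "i < length w"
  shows "DS (Suc N) x (contract (\<beta> @ [length w - i]) w) =
    DS N x (contract (\<beta> @ [length w - i]) w) +
    DS N x (contract \<beta> (take i w)) * evalm (sum_list (drop i w)) (x N)"
proof -
  have "sum_list \<beta> = i" using assms(1) by (simp add: comps_def)
  then have "contract (\<beta> @ [length w - i]) w = contract \<beta> (take i w) @ [sum_list (drop i w)]"
    by (simp add: contract_append flip: contract_take[of \<beta> w])
  then show ?thesis by (simp add: DS_Suc_snoc)
qed

lemma hoffman_adj_DS_Suc:
  fixes x :: "nat \<Rightarrow> nat \<Rightarrow> 'k::field_char_0"
  assumes "w \<noteq> []"
  shows "hoffman_adj (DS (Suc N) x) w = hoffman_adj (DS N x) w +
    (\<Sum>i<length w. hoffman_adj (DS N x) (take i w) * exp_ser (x N) (drop i w))"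
proof -
  let ?n = "length w"
  let ?d = "\<lambda>\<alpha>. of_nat (prod_list (map fact \<alpha>)) :: 'k"
  have step: "DS (Suc N) x (contract (\<beta> @ [?n - i]) w) / ?d (\<beta> @ [?n - i]) =
      DS N x (contract (\<beta> @ [?n - i]) w) / ?d (\<beta> @ [?n - i]) +
      DS N x (contract \<beta> (take i w)) / ?d \<beta> * exp_ser (x N) (drop i w)"
    if "i < ?n" "\<beta> \<in> comps i" for i \<beta>
    using that by (simp add: DS_contract_snoc exp_ser_def add_divide_distrib)
  have "hoffman_adj (DS (Suc N) x) w =
      (\<Sum>i<?n. \<Sum>\<beta>\<in>comps i. DS (Suc N) x (contract (\<beta> @ [?n - i]) w) / ?d (\<beta> @ [?n - i]))"
    using assms by (simp add: hoffman_adj_eq_sum_comps sum_comps_snoc)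
  also have "\<dots> = (\<Sum>i<?n. \<Sum>\<beta>\<in>comps i. DS N x (contract (\<beta> @ [?n - i]) w) / ?d (\<beta> @ [?n - i]))
      + (\<Sum>i<?n. (\<Sum>\<beta>\<in>comps i. DS N x (contract \<beta> (take i w)) / ?d \<beta>) * exp_ser (x N) (drop i w))"
    using step by (simp add: sum.distrib sum_divide_distrib sum_distrib_right)
  also have "\<dots> = hoffman_adj (DS N x) w +
      (\<Sum>i<?n. hoffman_adj (DS N x) (take i w) * exp_ser (x N) (drop i w))"
    using assms by (simp add: hoffman_adj_eq_sum_comps sum_comps_snoc)
  finally show ?thesis .
qed

lemma hoffman_adj_DS: "hoffman_adj (DS N x) w = exp_prod x N w"
proof (induction N arbitrary: w)
  case 0
  have "contract \<alpha> w \<noteq> []" if "w \<noteq> []" "\<alpha> \<in> comps (length w)" for \<alpha>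
    using that by (auto simp: comps_def dest: arg_cong[where f = length])
  then show ?case
    by (cases "w = []") (simp_all add: hoffman_adj_eq_sum_comps DS_0 eps_def)
next
  case (Suc N)
  show ?case
  proof (cases "w = []")
    case False
    then show ?thesis
      by (simp add: hoffman_adj_DS_Suc Suc.IH conc_def lessThan_Suc_atMost[symmetric] exp_ser_def evalm_def)
  qed (simp add: hoffman_adj_eq_sum_comps exp_ser_def evalm_def)
qed

lemma ht_take_le: "ht (take k w) \<le> ht w"
  and ht_drop_le: "ht (drop k w) \<le> ht w"
  using ht_append[of "take k w" "drop k w"] by simp_all

lemma length_le_ht: "\<forall>I\<in>set w. I \<noteq> {#} \<Longrightarrow> length w \<le> ht w"
  by (induction w) (auto simp: ht_def Suc_le_eq nonempty_has_size)

lemma length_le_ht_if_is_word: "is_word d w \<Longrightarrow> length w \<le> ht w"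
  by (simp add: length_le_ht is_word_def is_letter_def)

lemma unit_ser_eq_eps: "unit_ser = eps"
  by (simp add: fun_eq_iff unit_ser_def wordp_def eps_def)

lemma pow_h_eq_conc_pow: "ht w \<le> h \<Longrightarrow> pow_h h n a w = conc_pow n a w"
proof (induction n arbitrary: w)
  case (Suc n)
  then have "pow_h h n a (drop k w) = conc_pow n a (drop k w)" for k
    using ht_drop_le[of k w] by simp
  then show ?case
    using Suc.prems by (simp add: conc_h_def conc_def)
qed (simp add: trunc_def unit_ser_eq_eps)

lemma conc_pow_cong:
  assumes "\<And>z. ht z \<le> ht w \<Longrightarrow> A z = B z"
  shows "conc_pow n A w = conc_pow n B w"
  using assms
proof (induction n arbitrary: w)
  case (Suc n)
  then have "conc_pow n A (drop k w) = conc_pow n B (drop k w)" "A (take k w) = B (take k w)" for k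
    using ht_drop_le[of k w] ht_take_le[of k w] by simp_all
  then show ?case by (simp add: conc_def)
qed simp

lemma conc_pow_eq_0:
  assumes "A [] = 0" "length w < n"
  shows "conc_pow n A w = 0"
  using assms(2)
proof (induction n arbitrary: w)
  case (Suc n)
  have "A (take k w) * conc_pow n A (drop k w) = 0" if "k \<le> length w" for k
    using Suc that assms(1) by (cases k) simp_all
  then show ?case by (simp add: conc_def)
qed simp

text \<open>When \<open>S [] = 1\<close>, the terms with \<open>n > length w\<close> of the logarithm series vanish.\<close>
definition log_ser :: "('a list \<Rightarrow> 'k::field_char_0) \<Rightarrow> 'a list \<Rightarrow> 'k" where
  "log_ser S w = (\<Sum>n\<in>{1..length w}. (-1) ^ (n - 1) / of_nat n * conc_pow n (\<lambda>z. S z - eps z) w)"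

lemma log_ser_Nil [simp]: "log_ser S [] = 0"
  by (simp add: log_ser_def)

lemma log_ser_singleton [simp]: "log_ser S [a] = S [a]"
  by (simp add: log_ser_def conc_def eps_def)

lemma logh_eq_log_ser:
  assumes "ht w \<le> h" "length w \<le> h" "S [] = 1" "\<And>z. ht z \<le> ht w \<Longrightarrow> U z = S z"
  shows "logh h U w = log_ser S w"
proof -
  have "conc_pow n (\<lambda>z. U z - unit_ser z) w = conc_pow n (\<lambda>z. S z - eps z) w" for n
    using assms(4) by (intro conc_pow_cong) (simp add: unit_ser_eq_eps)
  then have "logh h U w = (\<Sum>n\<in>{1..h}. (-1) ^ (n - 1) / of_nat n * conc_pow n (\<lambda>z. S z - eps z) w)"
    using assms(1) by (simp add: logh_def pow_h_eq_conc_pow)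
  also have "\<dots> = log_ser S w"
    unfolding log_ser_def using assms(2,3)
    by (intro sum.mono_neutral_right) (auto simp: conc_pow_eq_0 eps_def)
  finally show ?thesis .
qed

lemma logh_hoffman_adj_trunc_DS:
  assumes "is_word d w" "ht w \<le> h"
  shows "logh h (hoffman_adj (trunc h (DS N x))) w = log_ser (exp_prod x N) w"
  using assms length_le_ht_if_is_word[OF assms(1)]
  by (intro logh_eq_log_ser) (simp_all add: hoffman_adj_trunc hoffman_adj_DS)

section \<open>Pairing with the Eulerian idempotent\<close>

definition supp :: "('a \<Rightarrow> 'k::zero) \<Rightarrow> 'a set" where
  "supp p = {u. p u \<noteq> 0}"

lemma pair_eq_sum:
  assumes "finite F" "supp p \<subseteq> F"
  shows "pair S p = (\<Sum>u\<in>F. S u * p u)"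
  unfolding pair_def using assms by (intro sum.mono_neutral_left) (auto simp: supp_def)

lemma sum_mset_eq_sum_count:
  assumes "finite F" "set_mset M \<subseteq> F"
  shows "(\<Sum>z\<in>#M. f z) = (\<Sum>z\<in>F. of_nat (count M z) * f z)"
  using assms(2)
proof (induction M)
  case (add x M)
  have "(\<Sum>z\<in>F. of_nat (count (add_mset x M) z) * f z) =
      (\<Sum>z\<in>F. of_nat (count M z) * f z + (if z = x then f z else 0))"
    by (rule sum.cong) (auto simp: algebra_simps)
  with add assms(1) show ?case
    by (simp add: sum.distrib add.commute)
qed simp

lemma shuffle_eval_eq_sum_perms:
  assumes "mset u + mset v = mset w"
  shows "shuffle_eval A u v =
    (\<Sum>z\<in>permutations_of_multiset (mset w). of_nat (count (shuffle_mset u v) z) * A z)"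
  unfolding shuffle_eval_def using assms
  by (intro sum_mset_eq_sum_count)
    (simp, auto simp: permutations_of_multiset_def dest: mset_in_shuffle_mset)

lemma shuffle_p_wordp:
  fixes q :: "word \<Rightarrow> 'k::comm_ring_1"
  shows "shuffle_p (wordp u) q z = (\<Sum>v\<in>supp q. q v * of_nat (count (shuffle_mset u v) z))"
proof -
  have "{u'. wordp u u' \<noteq> (0 :: 'k)} = {u}" by (auto simp: wordp_def)
  then show ?thesis by (simp add: shuffle_p_def wordp_def shuffle_w_eq_count supp_def)
qed

lemma supp_shuffle_list:
  "supp (shuffle_list ps :: word \<Rightarrow> 'k::comm_ring_1) \<subseteq> permutations_of_multiset (mset (concat ps))"
proof (induction ps)
  case Nil
  then show ?case by (auto simp: supp_def unit_ser_def wordp_def permutations_of_multiset_def)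
next
  case (Cons u us)
  show ?case
  proof
    fix z assume "z \<in> supp (shuffle_list (u # us) :: word \<Rightarrow> 'k)"
    then obtain v where "v \<in> supp (shuffle_list us :: word \<Rightarrow> 'k)"
      and "shuffle_list us v * of_nat (count (shuffle_mset u v) z) \<noteq> (0 :: 'k)"
      by (auto simp: supp_def shuffle_p_wordp elim!: sum.not_neutral_contains_not_neutral)
    moreover from this(2) have "z \<in># shuffle_mset u v"
      by (metis count_eq_zero_iff mult_zero_right of_nat_0)
    ultimately show "z \<in> permutations_of_multiset (mset (concat (u # us)))"
      using Cons.IH by (auto simp: permutations_of_multiset_def dest!: mset_in_shuffle_mset)
  qed
qed

lemma pair_shuffle_list:
  fixes S :: "word \<Rightarrow> 'k::comm_ring_1"
  assumes S: "shuffle_character S"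
  shows "pair S (shuffle_list ps) = prod_list (map S ps)"
proof (induction ps)
  case Nil
  have "pair S (unit_ser :: word \<Rightarrow> 'k) = (\<Sum>u\<in>{[]}. S u * unit_ser u)"
    by (rule pair_eq_sum) (auto simp: supp_def unit_ser_def wordp_def)
  then show ?case using S by (simp add: shuffle_character_def unit_ser_def wordp_def)
next
  case (Cons u us)
  let ?q = "shuffle_list us :: word \<Rightarrow> 'k"
  let ?F = "permutations_of_multiset (mset (concat (u # us)))"
  have "pair S (shuffle_list (u # us)) = (\<Sum>z\<in>?F. S z * shuffle_list (u # us) z)"
    by (rule pair_eq_sum[OF finite_permutations_of_multiset supp_shuffle_list])
  also have "\<dots> = (\<Sum>v\<in>supp ?q. ?q v * (\<Sum>z\<in>?F. of_nat (count (shuffle_mset u v) z) * S z))"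
    by (simp add: shuffle_p_wordp sum_distrib_left mult_ac sum.swap[where A = "permutations_of_multiset _"])
  also have "\<dots> = (\<Sum>v\<in>supp ?q. ?q v * shuffle_eval S u v)"
  proof (intro sum.cong refl arg_cong2[where f = "(*)"])
    fix v assume "v \<in> supp ?q"
    then have "mset u + mset v = mset (concat (u # us))"
      using supp_shuffle_list[of us] by (auto simp: permutations_of_multiset_def)
    then show "(\<Sum>z\<in>?F. of_nat (count (shuffle_mset u v) z) * S z) = shuffle_eval S u v"
      by (rule shuffle_eval_eq_sum_perms[symmetric])
  qed
  also have "\<dots> = S u * pair S ?q"
    using S by (simp add: shuffle_character_def pair_def supp_def sum_distrib_left mult_ac)
  finally show ?case using Cons by simp
qed

lemma decomps_0 [simp]: "decomps 0 w = (if w = [] then {[]} else {})"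
  by (auto simp: decomps_def)

lemma decomps_Suc:
  "decomps (Suc n) w = (\<lambda>(k, ps). take k w # ps) ` (SIGMA k:{1..length w}. decomps n (drop k w))"
proof (intro equalityI subsetI)
  fix qs assume "qs \<in> decomps (Suc n) w"
  then obtain p ps where qs: "qs = p # ps" "ps \<in> decomps n (concat ps)" "p @ concat ps = w" "p \<noteq> []"
    by (cases qs) (auto simp: decomps_def)
  then have "take (length p) w = p" "drop (length p) w = concat ps" "length p \<in> {1..length w}"
    by (auto simp: Suc_le_eq)
  with qs show "qs \<in> (\<lambda>(k, ps). take k w # ps) ` (SIGMA k:{1..length w}. decomps n (drop k w))"
    by (auto intro!: image_eqI[of _ _ "(length p, ps)"])
qed (auto simp: decomps_def)

lemma inj_on_decomps_Suc:
  "inj_on (\<lambda>(k, ps). take k w # ps) (SIGMA k:{1..length w}. decomps n (drop k w))"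
  by (rule inj_onI) (auto, metis atLeastAtMost_iff length_take min.absorb2)

lemma finite_decomps: "finite (decomps n w)"
  by (induction n arbitrary: w) (simp_all add: decomps_Suc)

lemma sum_decomps_prod_list:
  assumes "A [] = 0"
  shows "(\<Sum>ps\<in>decomps n w. prod_list (map A ps)) = conc_pow n A w"
proof (induction n arbitrary: w)
  case 0
  then show ?case by (simp add: eps_def)
next
  case (Suc n)
  have "(\<Sum>ps\<in>decomps (Suc n) w. prod_list (map A ps)) =
      (\<Sum>(k, ps)\<in>(SIGMA k:{1..length w}. decomps n (drop k w)). A (take k w) * prod_list (map A ps))"
    unfolding decomps_Suc by (subst sum.reindex[OF inj_on_decomps_Suc]) (simp add: split_def)
  also have "\<dots> = (\<Sum>k\<in>{1..length w}. \<Sum>ps\<in>decomps n (drop k w). A (take k w) * prod_list (map A ps))"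
    by (rule sum.Sigma[symmetric]) (simp_all add: finite_decomps)
  also have "\<dots> = (\<Sum>k\<le>length w. A (take k w) * conc_pow n A (drop k w))"
    using assms by (simp add: Suc.IH sum_distrib_left[symmetric] atMost_atLeast0 sum.atLeast_Suc_atMost)
  finally show ?case by (simp add: conc_def)
qed

lemma supp_euler_w:
  "supp (euler_w w :: word \<Rightarrow> 'k::field_char_0) \<subseteq> permutations_of_multiset (mset w)"
proof
  fix z assume "z \<in> supp (euler_w w :: word \<Rightarrow> 'k)"
  then obtain n ps where "ps \<in> decomps n w" "(shuffle_list ps z :: 'k) \<noteq> 0"
    by (auto simp: supp_def euler_w_def elim!: sum.not_neutral_contains_not_neutral)
  then show "z \<in> permutations_of_multiset (mset w)"
    using supp_shuffle_list[of ps] by (auto simp: supp_def decomps_def)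
qed

lemma pair_euler_w:
  fixes S :: "word \<Rightarrow> 'k::field_char_0"
  assumes S: "shuffle_character S"
  shows "pair S (euler_w w) = log_ser S w"
proof -
  let ?P = "permutations_of_multiset (mset w)"
  let ?c = "\<lambda>n. (-1) ^ (n - 1) / of_nat n :: 'k"
  have "pair S (euler_w w) = (\<Sum>z\<in>?P. S z * euler_w w z)"
    using supp_euler_w by (intro pair_eq_sum) simp_all
  also have "\<dots> = (\<Sum>z\<in>?P. \<Sum>n\<in>{1..length w}. \<Sum>ps\<in>decomps n w. S z * (?c n * shuffle_list ps z))"
    by (simp only: euler_w_def sum_distrib_left)
  also have "\<dots> = (\<Sum>n\<in>{1..length w}. \<Sum>ps\<in>decomps n w. \<Sum>z\<in>?P. S z * (?c n * shuffle_list ps z))"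
    by (simp only: sum.swap[of _ ?P])
  also have "\<dots> = (\<Sum>n\<in>{1..length w}. ?c n * (\<Sum>ps\<in>decomps n w. \<Sum>z\<in>?P. S z * shuffle_list ps z))"
    by (simp add: sum_distrib_left mult.left_commute)
  also have "\<dots> = (\<Sum>n\<in>{1..length w}. ?c n * (\<Sum>ps\<in>decomps n w. prod_list (map (\<lambda>z. S z - eps z) ps)))"
  proof (intro sum.cong refl arg_cong2[where f = "(*)"])
    fix n ps assume ps: "ps \<in> decomps n w"
    then have "(\<Sum>z\<in>?P. S z * shuffle_list ps z) = pair S (shuffle_list ps)"
      using supp_shuffle_list[of ps] by (intro pair_eq_sum[symmetric]) (auto simp: decomps_def)
    also have "\<dots> = prod_list (map (\<lambda>z. S z - eps z) ps)"
      using ps by (simp add: pair_shuffle_list[OF S] eps_def decomps_def cong: map_cong)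
    finally show "(\<Sum>z\<in>?P. S z * shuffle_list ps z) = prod_list (map (\<lambda>z. S z - eps z) ps)" .
  qed
  also have "\<dots> = log_ser S w"
    using S by (simp add: log_ser_def sum_decomps_prod_list shuffle_character_def eps_def)
  finally show ?thesis .
qed

definition lmul :: "'a \<Rightarrow> ('a list \<Rightarrow> 'k::comm_ring_1) \<Rightarrow> 'a list \<Rightarrow> 'k" where
  "lmul a P z = (if z \<noteq> [] \<and> hd z = a then P (tl z) else 0)"

definition rmul :: "'a \<Rightarrow> ('a list \<Rightarrow> 'k::comm_ring_1) \<Rightarrow> 'a list \<Rightarrow> 'k" where
  "rmul a P z = (if z \<noteq> [] \<and> last z = a then P (butlast z) else 0)"

fun lie_poly :: "'a list \<Rightarrow> 'a list \<Rightarrow> 'k::comm_ring_1" where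
  "lie_poly [] = (\<lambda>_. 0)"
| "lie_poly [a] = (\<lambda>z. if z = [a] then 1 else 0)"
| "lie_poly (a # b # u) = (\<lambda>z. lmul a (lie_poly (b # u)) z - rmul a (lie_poly (b # u)) z)"

lemma of_int_lie_poly: "of_int (lie_poly u z) = (lie_poly u z :: 'k::comm_ring_1)"
  by (induction u arbitrary: z rule: lie_poly.induct) (auto simp: lmul_def rmul_def)

lemma mset_eq_if_lie_poly_nonzero: "lie_poly u z \<noteq> (0 :: 'k::comm_ring_1) \<Longrightarrow> mset z = mset u"
proof (induction u arbitrary: z rule: lie_poly.induct)
  case (3 a b u)
  show ?case
  proof (cases "lmul a (lie_poly (b # u)) z \<noteq> (0 :: 'k)")
    case True
    then have "z = a # tl z" "lie_poly (b # u) (tl z) \<noteq> (0 :: 'k)"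
      by (auto simp: lmul_def split: if_splits)
    with "3.IH" show ?thesis by (metis mset.simps(2))
  next
    case False
    with "3.prems" have "z = butlast z @ [a]" "lie_poly (b # u) (butlast z) \<noteq> (0 :: 'k)"
      by (auto simp: rmul_def split: if_splits)
    with "3.IH" show ?thesis by (metis mset.simps(2) mset_append mset_single_iff add_mset_add_single union_commute)
  qed
qed (auto split: if_splits)

lemma ht_eq_if_mset_eq: "mset z = mset u \<Longrightarrow> ht z = ht u"
  unfolding ht_def by (metis mset_map sum_mset_sum_list)

lemma sum_wordp_take: "(\<Sum>k\<le>length z. wordp [e] (take k z) * P (drop k z)) = lmul e P z"
proof (cases z)
  case (Cons c z')
  then have "(\<Sum>k\<le>length z. wordp [e] (take k z) * P (drop k z)) =
      (\<Sum>j\<le>length z'. wordp [e] (c # take j z') * P (drop j z'))"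
    by (simp add: sum.atMost_Suc_shift wordp_def del: sum.atMost_Suc)
  also have "\<dots> = (\<Sum>j\<le>length z'. if j = 0 \<and> c = e then P z' else 0)"
    by (intro sum.cong refl) (auto simp: wordp_def)
  finally show ?thesis
    using Cons by (simp add: lmul_def)
qed (simp add: wordp_def lmul_def)

lemma sum_wordp_drop: "(\<Sum>k\<le>length z. P (take k z) * wordp [e] (drop k z)) = rmul e P z"
proof (cases z rule: rev_cases)
  case (snoc z' c)
  have "(\<Sum>k\<le>length z. P (take k z) * wordp [e] (drop k z)) =
      (\<Sum>k\<le>length z. if k = length z' \<and> c = e then P z' else 0)"
  proof (intro sum.cong refl)
    fix k assume "k \<in> {..length z}"
    then show "P (take k z) * wordp [e] (drop k z) = (if k = length z' \<and> c = e then P z' else 0)"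
      using snoc by (cases "k \<le> length z'") (auto simp: wordp_def Cons_eq_append_conv)
  qed
  then show ?thesis
    using snoc by (simp add: rmul_def)
qed (simp add: wordp_def rmul_def)

lemma lie_eq_lie_poly: "ht u \<le> h \<Longrightarrow> (lie h u :: 'k::comm_ring_1 ser) = lie_poly u"
proof (induction h u rule: lie.induct)
  case (3 h e e' u)
  then have IH: "(lie h (e' # u) :: 'k ser) = lie_poly (e' # u)"
    by (simp add: ht_def)
  show ?case
  proof
    fix z
    show "(lie h (e # e' # u) :: 'k ser) z = lie_poly (e # e' # u) z"
    proof (cases "ht z \<le> h")
      case True
      then show ?thesis
        using IH by (simp add: bracket_def conc_h_def sum_wordp_take sum_wordp_drop)
    next
      case False
      have "lie_poly (e # e' # u) z = (0 :: 'k)"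
      proof (rule ccontr)
        assume "lie_poly (e # e' # u) z \<noteq> (0 :: 'k)"
        then have "ht z = ht (e # e' # u)"
          by (intro ht_eq_if_mset_eq mset_eq_if_lie_poly_nonzero)
        with False "3.prems" show False by simp
      qed
      with False show ?thesis
        by (simp add: bracket_def conc_h_def)
    qed
  qed
qed (simp_all add: wordp_def fun_eq_iff)

definition split_shuffle :: "'a list \<Rightarrow> nat \<Rightarrow> 'a list multiset" where
  "split_shuffle w i = shuffle_mset (take i w) (rev (drop i w))"

lemma count_split_shuffle_snoc:
  assumes "i \<le> length w"
  shows "count (split_shuffle w i) (t @ [b]) =
    (if 0 < i \<and> w ! (i - 1) = b then count (shuffle_mset (take (i - 1) w) (rev (drop i w))) t else 0) +
    (if i < length w \<and> w ! i = b then count (shuffle_mset (take i w) (rev (drop (Suc i) w))) t else 0)"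
proof -
  have "(take i w \<noteq> [] \<and> last (take i w) = b) = (0 < i \<and> w ! (i - 1) = b)"
    using assms by (cases i) (auto simp: take_Suc_conv_app_nth)
  moreover have "(rev (drop i w) \<noteq> [] \<and> last (rev (drop i w)) = b) = (i < length w \<and> w ! i = b)"
    using assms by (auto simp: hd_drop_conv_nth last_rev)
  moreover have "butlast (take i w) = take (i - 1) w"
    using assms by (simp add: butlast_take)
  moreover have "butlast (rev (drop i w)) = rev (drop (Suc i) w)"
    by (simp add: butlast_rev drop_Suc tl_drop)
  ultimately show ?thesis
    unfolding split_shuffle_def count_shuffle_mset_snoc by presburger
qed

text \<open>The antipode identity. The terms cancel in pairs, according to whether the last letter
of \<open>t\<close> is taken from the prefix or from the reversed suffix.\<close>
lemma alternating_sum_split_shuffle: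
  assumes "w \<noteq> [] \<or> t \<noteq> []"
  shows "(\<Sum>i\<le>length w. (-1) ^ (length w - i) * of_nat (count (split_shuffle w i) t)) = (0 :: 'k::comm_ring_1)"
proof (cases t rule: rev_cases)
  case Nil
  with assms show ?thesis
    by (auto simp: split_shuffle_def count_shuffle_mset_Nil intro!: sum.neutral)
next
  case (snoc t' b)
  define C where "C j = (if w ! j = b
    then of_nat (count (shuffle_mset (take j w) (rev (drop (Suc j) w))) t') else 0 :: 'k)" for j
  show ?thesis
  proof (cases w rule: rev_cases)
    case (snoc w' c)
    define m where "m = length w'"
    then have m: "length w = Suc m"
      using snoc by simp
    have "(-1) ^ (Suc m - i) * of_nat (count (split_shuffle w i) t) =
        (if 0 < i then (-1) ^ (Suc m - i) * C (i - 1) else 0) +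
        (if i < Suc m then (-1) ^ (Suc m - i) * C i else 0)" if "i \<le> Suc m" for i
      using that unfolding \<open>t = t' @ [b]\<close> count_split_shuffle_snoc[OF that[folded m]]
      by (cases i) (simp_all add: C_def m distrib_left)
    then have "(\<Sum>i\<le>length w. (-1) ^ (length w - i) * of_nat (count (split_shuffle w i) t)) =
        (\<Sum>i\<le>Suc m. if 0 < i then (-1) ^ (Suc m - i) * C (i - 1) else 0) +
        (\<Sum>i\<le>Suc m. if i < Suc m then (-1) ^ (Suc m - i) * C i else 0)"
      by (simp add: m sum.distrib)
    also have "\<dots> = (\<Sum>j\<le>m. (-1) ^ (m - j) * C j) + (\<Sum>j\<le>m. (-1) ^ (Suc m - j) * C j)"
      by (subst sum.atMost_Suc_shift) simp
    also have "\<dots> = 0"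
    proof -
      have "(-1) ^ (m - j) * C j + (-1) ^ (Suc m - j) * C j = 0" if "j \<le> m" for j
        using that by (simp add: Suc_diff_le)
      then show ?thesis
        by (simp add: sum.distrib[symmetric])
    qed
    finally show ?thesis .
  qed (simp add: \<open>t = t' @ [b]\<close> split_shuffle_def)
qed

lemma tl_rev: "tl (rev xs) = rev (butlast xs)"
  by (metis butlast_rev rev_rev_ident)

lemma count_split_shuffle_Cons:
  assumes "i \<le> length z"
  shows "count (split_shuffle z i) (a # u) =
    (if 0 < i \<and> hd z = a then count (split_shuffle (tl z) (i - 1)) u else 0) +
    (if i < length z \<and> last z = a then count (split_shuffle (butlast z) i) u else 0)"
proof -
  have "(if take i z \<noteq> [] \<and> hd (take i z) = a
        then count (shuffle_mset (tl (take i z)) (rev (drop i z))) u else 0) =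
      (if 0 < i \<and> hd z = a then count (split_shuffle (tl z) (i - 1)) u else 0)"
    using assms by (cases i; cases z) (auto simp: split_shuffle_def)
  moreover have "(if rev (drop i z) \<noteq> [] \<and> hd (rev (drop i z)) = a
        then count (shuffle_mset (take i z) (tl (rev (drop i z)))) u else 0) =
      (if i < length z \<and> last z = a then count (split_shuffle (butlast z) i) u else 0)"
    using assms by (auto simp: split_shuffle_def hd_rev tl_rev butlast_drop take_butlast)
  ultimately show ?thesis
    by (simp only: split_shuffle_def count_shuffle_mset_Cons)
qed

lemma sum_lie_coeff_Suc:
  fixes X :: "nat \<Rightarrow> 'k::comm_ring_1"
  shows "(\<Sum>i\<le>n. (-1) ^ Suc (Suc n - i) * of_nat (Suc n - i) * X i) =
    - (\<Sum>i\<le>n. (-1) ^ Suc (n - i) * of_nat (n - i) * X i) + (\<Sum>i\<le>n. (-1) ^ (n - i) * X i)"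
  by (simp add: Suc_diff_le sum_negf sum.distrib[symmetric] algebra_simps)

text \<open>The coefficients of the right-normed bracketing, read off by pairing with the shuffles
of prefixes with reversed suffixes.\<close>
lemma sum_split_shuffle_Cons:
  fixes c :: "nat \<Rightarrow> 'k::comm_ring_1"
  assumes "z \<noteq> []"
  shows "(\<Sum>i\<le>length z. c (length z - i) * of_nat (count (split_shuffle z i) (a # u))) =
    (if hd z = a
     then \<Sum>i\<le>length (tl z). c (length (tl z) - i) * of_nat (count (split_shuffle (tl z) i) u) else 0) +
    (if last z = a
     then \<Sum>i\<le>length (butlast z). c (Suc (length (butlast z)) - i) *
       of_nat (count (split_shuffle (butlast z) i) u) else 0)"
proof -
  let ?X = "\<lambda>z i. of_nat (count (split_shuffle z i) u) :: 'k"
  obtain n where n: "length z = Suc n" "length (tl z) = n" "length (butlast z) = n"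
    using assms by (cases z) auto
  have "(\<Sum>i\<le>length z. c (length z - i) * of_nat (count (split_shuffle z i) (a # u))) =
      (\<Sum>i\<le>length z. c (length z - i) * (if 0 < i \<and> hd z = a then ?X (tl z) (i - 1) else 0)) +
      (\<Sum>i\<le>length z. c (length z - i) * (if i < length z \<and> last z = a then ?X (butlast z) i else 0))"
    unfolding sum.distrib[symmetric]
    by (rule sum.cong[OF refl], simp only: atMost_iff count_split_shuffle_Cons of_nat_add
        if_distrib[of of_nat] of_nat_0 distrib_left)
  also have "(\<Sum>i\<le>length z. c (length z - i) * (if 0 < i \<and> hd z = a then ?X (tl z) (i - 1) else 0)) =
      (if hd z = a then \<Sum>i\<le>n. c (n - i) * ?X (tl z) i else 0)"
    by (cases "hd z = a") (simp_all add: n sum.atMost_Suc_shift del: sum.atMost_Suc)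
  also have "(\<Sum>i\<le>length z. c (length z - i) * (if i < length z \<and> last z = a then ?X (butlast z) i else 0)) =
      (if last z = a then \<Sum>i\<le>n. c (Suc n - i) * ?X (butlast z) i else 0)"
    by (cases "last z = a") (simp_all add: n)
  finally show ?thesis
    by (simp only: n)
qed

lemma lie_poly_eq_sum_split_shuffle:
  assumes "u \<noteq> []"
  shows "lie_poly u z =
    (\<Sum>i\<le>length z. (-1) ^ Suc (length z - i) * of_nat (length z - i) *
      of_nat (count (split_shuffle z i) u) :: 'k::comm_ring_1)"
  using assms
proof (induction u arbitrary: z rule: lie_poly.induct)
  case (2 a)
  have "count (split_shuffle z i) [a] = 0" if "z \<noteq> [a]" for i
    using that by (auto simp: split_shuffle_def count_eq_zero_iff dest!: mset_in_shuffle_mset)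
      (metis append_take_drop_id mset_append mset_rev mset_single_iff_right)
  then show ?case
    by (cases "z = [a]") (auto simp: split_shuffle_def)
next
  case (3 a b u)
  let ?c = "\<lambda>k. (-1) ^ Suc k * of_nat k :: 'k"
  let ?X = "\<lambda>z i. of_nat (count (split_shuffle z i) (b # u)) :: 'k"
  have IH: "lie_poly (b # u) y = (\<Sum>i\<le>length y. ?c (length y - i) * ?X y i)" for y
    using "3.IH" by simp
  show ?case
  proof (cases "z = []")
    case False
    let ?n = "length (butlast z)"
    have "(\<Sum>i\<le>?n. ?c (Suc ?n - i) * ?X (butlast z) i) = - lie_poly (b # u) (butlast z)"
      unfolding sum_lie_coeff_Suc IH
      using alternating_sum_split_shuffle[of "butlast z" "b # u", where 'k = 'k] by simp
    with False have "lie_poly (a # b # u) z =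
        (if hd z = a then \<Sum>i\<le>length (tl z). ?c (length (tl z) - i) * ?X (tl z) i else 0) +
        (if last z = a then \<Sum>i\<le>?n. ?c (Suc ?n - i) * ?X (butlast z) i else 0)"
      by (simp add: IH[of "tl z"] lmul_def rmul_def)
    also have "\<dots> = (\<Sum>i\<le>length z. ?c (length z - i) * of_nat (count (split_shuffle z i) (a # b # u)))"
      by (rule sum_split_shuffle_Cons[OF False, symmetric])
    finally show ?thesis .
  qed (simp add: lmul_def rmul_def split_shuffle_def)
qed simp

section \<open>Functionals vanishing on shuffles\<close>

definition shuffle_primitive_on :: "'a multiset \<Rightarrow> ('a list \<Rightarrow> 'k::comm_ring_1) \<Rightarrow> bool" where
  "shuffle_primitive_on M L \<longleftrightarrow>
    (\<forall>p q. p \<noteq> [] \<longrightarrow> q \<noteq> [] \<longrightarrow> mset p + mset q = M \<longrightarrow> shuffle_eval L p q = 0)"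

lemma sum_atMost_ends:
  fixes n :: nat
  assumes "0 < n" "\<And>i. 0 < i \<Longrightarrow> i < n \<Longrightarrow> f i = 0"
  shows "(\<Sum>i\<le>n. f i) = f 0 + (f n :: 'k::comm_monoid_add)"
proof -
  have "(\<Sum>i\<le>n. f i) = (\<Sum>i\<in>{0, n}. f i)"
  proof (rule sum.mono_neutral_right)
    show "\<forall>i\<in>{..n} - {0, n}. f i = 0"
    proof
      fix i assume "i \<in> {..n} - {0, n}"
      then show "f i = 0" by (intro assms(2)) auto
    qed
  qed auto
  with assms(1) show ?thesis by simp
qed

lemma shuffle_eval_split_eq_sum:
  assumes "z \<in> permutations_of_multiset (mset w)"
  shows "shuffle_eval L (take i z) (rev (drop i z)) =
    (\<Sum>u\<in>permutations_of_multiset (mset w). of_nat (count (split_shuffle z i) u) * L u)"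
proof -
  have "mset (take i z) + mset (rev (drop i z)) = mset w"
    using assms by (metis append_take_drop_id mset_append mset_rev permutations_of_multisetD)
  then show ?thesis
    unfolding split_shuffle_def by (rule shuffle_eval_eq_sum_perms)
qed

lemma shuffle_eval_split_eq_0:
  assumes "shuffle_primitive_on (mset z) L" "0 < i" "i < length z"
  shows "shuffle_eval L (take i z) (rev (drop i z)) = 0"
proof -
  have "take i z \<noteq> []" "rev (drop i z) \<noteq> []"
    using assms(2,3) by auto
  moreover have "mset (take i z) + mset (rev (drop i z)) = mset z"
    by (metis append_take_drop_id mset_append mset_rev)
  ultimately show ?thesis
    using assms(1) by (simp add: shuffle_primitive_on_def)
qed

text \<open>The antipode acts as \<open>-1\<close> on primitive elements.\<close>
lemma shuffle_primitive_on_rev: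
  fixes L :: "'a list \<Rightarrow> 'k::comm_ring_1"
  assumes "z \<noteq> []" "shuffle_primitive_on (mset z) L"
  shows "L z = - ((-1) ^ length z * L (rev z))"
proof -
  let ?P = "permutations_of_multiset (mset z)"
  let ?n = "length z"
  define T where "T i = shuffle_eval L (take i z) (rev (drop i z))" for i
  have "(\<Sum>i\<le>?n. (-1) ^ (?n - i) * T i) =
      (\<Sum>u\<in>?P. L u * (\<Sum>i\<le>?n. (-1) ^ (?n - i) * of_nat (count (split_shuffle z i) u)))"
    by (simp add: T_def shuffle_eval_split_eq_sum[OF permutations_of_multisetI[OF refl]]
        sum_distrib_left sum.swap[of _ ?P] mult_ac)
  also have "\<dots> = 0"
    using assms(1) alternating_sum_split_shuffle[of z, where 'k = 'k] by simp
  finally have "(-1) ^ ?n * L (rev z) + L z = 0"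
    using assms sum_atMost_ends[of ?n "\<lambda>i. (-1) ^ (?n - i) * T i"]
    by (simp add: T_def shuffle_eval_split_eq_0)
  then show ?thesis
    by (simp add: eq_neg_iff_add_eq_0 add.commute)
qed

text \<open>Dual form of the Dynkin-Specht-Wever lemma: functionals vanishing on shuffles play the
role of Lie elements, on which the right-normed bracketing acts as multiplication by the degree.\<close>
lemma dynkin_specht_wever_dual:
  fixes L :: "'a list \<Rightarrow> 'k::comm_ring_1"
  assumes "w \<noteq> []" and prim: "shuffle_primitive_on (mset w) L"
    and z: "z \<in> permutations_of_multiset (mset w)"
  shows "(\<Sum>u\<in>permutations_of_multiset (mset w). lie_poly u z * L u) = of_nat (length w) * L z"
proof -
  let ?P = "permutations_of_multiset (mset w)"
  let ?n = "length z"
  define T where "T i = shuffle_eval L (take i z) (rev (drop i z))" for i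
  have mz: "mset z = mset w" and n: "?n = length w"
    using z by (auto simp: permutations_of_multiset_def dest: mset_eq_length)
  with assms(1) prim have "z \<noteq> []" and prim_z: "shuffle_primitive_on (mset z) L"
    by auto
  have nonempty: "u \<noteq> []" if "u \<in> ?P" for u
    using that assms(1) by (auto simp: permutations_of_multiset_def)
  have "(\<Sum>u\<in>?P. lie_poly u z * L u) = (\<Sum>i\<le>?n. (-1) ^ Suc (?n - i) * of_nat (?n - i) * T i)"
    using z by (simp add: T_def shuffle_eval_split_eq_sum lie_poly_eq_sum_split_shuffle nonempty
        sum_distrib_left sum_distrib_right sum.swap[of _ ?P] mult_ac cong: sum.cong)
  also have "\<dots> = (-1) ^ Suc ?n * of_nat ?n * L (rev z)"
    using \<open>z \<noteq> []\<close> prim_z sum_atMost_ends[of ?n "\<lambda>i. (-1) ^ Suc (?n - i) * of_nat (?n - i) * T i"]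
    by (simp add: T_def shuffle_eval_split_eq_0)
  also have "\<dots> = of_nat ?n * L z"
    using shuffle_primitive_on_rev[OF \<open>z \<noteq> []\<close> prim_z] by simp
  finally show ?thesis
    using n by simp
qed

lemma primitive_orthogonal_lie_eq_0_linordered:
  fixes L :: "'a list \<Rightarrow> 'r::linordered_field"
  assumes "w \<noteq> []" and prim: "shuffle_primitive_on (mset w) L"
    and orth: "\<And>u. u \<in> permutations_of_multiset (mset w) \<Longrightarrow>
      (\<Sum>z\<in>permutations_of_multiset (mset w). lie_poly u z * L z) = 0"
  shows "L w = 0"
proof -
  let ?P = "permutations_of_multiset (mset w)"
  have "of_nat (length w) * (\<Sum>z\<in>?P. L z * L z) = (\<Sum>z\<in>?P. L z * (of_nat (length w) * L z))"
    by (simp add: sum_distrib_left mult_ac)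
  also have "\<dots> = (\<Sum>z\<in>?P. L z * (\<Sum>u\<in>?P. lie_poly u z * L u))"
    by (intro sum.cong refl) (simp add: dynkin_specht_wever_dual[OF assms(1) prim])
  also have "\<dots> = (\<Sum>z\<in>?P. \<Sum>u\<in>?P. L u * (lie_poly u z * L z))"
    by (simp add: sum_distrib_left mult_ac)
  also have "\<dots> = (\<Sum>u\<in>?P. L u * (\<Sum>z\<in>?P. lie_poly u z * L z))"
    by (subst sum.swap) (simp add: sum_distrib_left)
  also have "\<dots> = 0"
    using orth by simp
  finally have "(\<Sum>z\<in>?P. L z * L z) = 0"
    using assms(1) by simp
  then have "\<forall>z\<in>?P. L z * L z = 0"
    by (simp add: sum_nonneg_eq_0_iff)
  then show ?thesis
    by (simp add: permutations_of_multiset_def)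
qed

lemma exists_rat_linear_functional:
  fixes a :: "'k::field_char_0"
  assumes "a \<noteq> 0"
  shows "\<exists>\<phi> :: 'k \<Rightarrow> rat. additive \<phi> \<and> (\<forall>q x. \<phi> (of_rat q * x) = q * \<phi> x) \<and> \<phi> a \<noteq> 0"
proof -
  interpret Q: vector_space "\<lambda>q x. of_rat q * x :: 'k"
    by unfold_locales (auto simp: algebra_simps of_rat_add of_rat_mult)
  have "Q.independent {a}"
    using assms by (simp add: Q.independent_insert)
  then obtain B where B: "Q.independent B" "Q.span B = UNIV" "a \<in> B"
    using Q.independent_extend_basis Q.span_extend_basis Q.extend_basis_superset by blast
  define \<phi> where "\<phi> x = Q.representation B x a" for x
  have "additive \<phi>"
    by unfold_locales (simp add: \<phi>_def Q.representation_add B)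
  moreover have "\<phi> (of_rat q * x) = q * \<phi> x" for q x
    by (simp add: \<phi>_def Q.representation_scale B)
  moreover have "\<phi> a \<noteq> 0"
    by (simp add: \<phi>_def Q.representation_basis B)
  ultimately show ?thesis
    by blast
qed

text \<open>Over a field of characteristic zero the positivity argument is not available, but
all identities involved have integer coefficients: applying a \<open>\<rat>\<close>-linear functional that
does not vanish at \<open>L w\<close> reduces to the ordered field \<open>\<rat>\<close>.\<close>
lemma primitive_orthogonal_lie_eq_0:
  fixes L :: "'a list \<Rightarrow> 'k::field_char_0"
  assumes "w \<noteq> []" and prim: "shuffle_primitive_on (mset w) L"
    and orth: "\<And>u. u \<in> permutations_of_multiset (mset w) \<Longrightarrow>
      (\<Sum>z\<in>permutations_of_multiset (mset w). lie_poly u z * L z) = 0"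
  shows "L w = 0"
proof (rule ccontr)
  assume "L w \<noteq> 0"
  then obtain \<phi> :: "'k \<Rightarrow> rat" where "additive \<phi>"
    and scale: "\<And>q x. \<phi> (of_rat q * x) = q * \<phi> x" and "\<phi> (L w) \<noteq> 0"
    using exists_rat_linear_functional by blast
  interpret additive \<phi> by fact
  have sum_mset: "\<phi> (\<Sum>z\<in>#M. f z) = (\<Sum>z\<in>#M. \<phi> (f z))" for M and f :: "'a list \<Rightarrow> 'k"
    by (induction M) (simp_all add: zero add)
  have int: "\<phi> (lie_poly u z * x) = lie_poly u z * \<phi> x" for u z x
  proof -
    have "\<phi> (lie_poly u z * x) = \<phi> (of_rat (of_int (lie_poly u z)) * x)"
      by (metis of_int_lie_poly of_rat_of_int_eq)
    also have "\<dots> = of_int (lie_poly u z) * \<phi> x"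
      by (rule scale)
    finally show ?thesis
      by (simp add: of_int_lie_poly)
  qed
  have "\<phi> (L w) = 0"
  proof (rule primitive_orthogonal_lie_eq_0_linordered[OF assms(1)])
    have "shuffle_eval (\<lambda>z. \<phi> (L z)) p q = \<phi> (shuffle_eval L p q)" for p q
      by (simp add: shuffle_eval_def sum_mset)
    with prim show "shuffle_primitive_on (mset w) (\<lambda>z. \<phi> (L z))"
      by (simp add: shuffle_primitive_on_def zero)
    fix u assume "u \<in> permutations_of_multiset (mset w)"
    moreover have "(\<Sum>z\<in>permutations_of_multiset (mset w). lie_poly u z * \<phi> (L z)) =
        \<phi> (\<Sum>z\<in>permutations_of_multiset (mset w). lie_poly u z * L z)"
      by (simp add: sum int)
    ultimately show "(\<Sum>z\<in>permutations_of_multiset (mset w). lie_poly u z * \<phi> (L z)) = 0"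
      using orth by (simp add: zero)
  qed
  with \<open>\<phi> (L w) \<noteq> 0\<close> show False ..
qed

section \<open>Logarithms of shuffle characters\<close>

lemma conc_add_eps_left: "conc (\<lambda>z. A z + eps z) B w = conc A B w + B w"
proof -
  have "conc (\<lambda>z. A z + eps z) B w = conc A B w + conc eps B w"
    by (simp only: conc_def distrib_right sum.distrib)
  then show ?thesis by simp
qed

lemma conc_sum_right: "conc A (\<lambda>z. \<Sum>j\<in>J. c j * B j z) w = (\<Sum>j\<in>J. c j * conc A (B j) w)"
  by (simp add: conc_def sum_distrib_left sum.swap[of _ J] mult_ac)

lemma sum_choose_Suc:
  fixes X :: "nat \<Rightarrow> 'k::comm_ring_1"
  shows "(\<Sum>j\<le>Suc k. of_nat (Suc k choose j) * X j) =
    (\<Sum>j\<le>k. of_nat (k choose j) * X j) + (\<Sum>j\<le>k. of_nat (k choose j) * X (Suc j))"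
proof -
  have "(\<Sum>j\<le>Suc k. of_nat (Suc k choose j) * X j) =
      (X 0 + (\<Sum>j\<le>k. of_nat (k choose Suc j) * X (Suc j))) + (\<Sum>j\<le>k. of_nat (k choose j) * X (Suc j))"
    by (simp add: sum.atMost_Suc_shift sum.distrib algebra_simps del: sum.atMost_Suc)
  also have "X 0 + (\<Sum>j\<le>k. of_nat (k choose Suc j) * X (Suc j)) = (\<Sum>j\<le>Suc k. of_nat (k choose j) * X j)"
    by (simp add: sum.atMost_Suc_shift del: sum.atMost_Suc)
  also have "\<dots> = (\<Sum>j\<le>k. of_nat (k choose j) * X j)"
    by (simp add: binomial_eq_0)
  finally show ?thesis .
qed

lemma conc_pow_add_eps:
  "conc_pow k (\<lambda>z. A z + eps z) w = (\<Sum>j\<le>k. of_nat (k choose j) * conc_pow j A w)"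
proof (induction k arbitrary: w)
  case (Suc k)
  have IH: "conc_pow k (\<lambda>z. A z + eps z) = (\<lambda>z. \<Sum>j\<le>k. of_nat (k choose j) * conc_pow j A z)"
    by (rule ext) (rule Suc.IH)
  have "conc_pow (Suc k) (\<lambda>z. A z + eps z) w =
      conc_pow k (\<lambda>z. A z + eps z) w + conc A (conc_pow k (\<lambda>z. A z + eps z)) w"
    by (simp add: conc_add_eps_left)
  also have "\<dots> = (\<Sum>j\<le>k. of_nat (k choose j) * conc_pow j A w) +
      (\<Sum>j\<le>k. of_nat (k choose j) * conc_pow (Suc j) A w)"
    by (simp add: IH conc_sum_right)
  finally show ?case
    by (simp only: sum_choose_Suc)
qed simp

definition binomial_poly :: "nat \<Rightarrow> 'k::field_char_0 poly" where
  "binomial_poly j = smult (1 / fact j) (\<Prod>i<j. [:- of_nat i, 1:])"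

lemma poly_binomial_poly: "poly (binomial_poly j) (of_nat k) = of_nat (k choose j)"
proof -
  have "poly (binomial_poly j) (of_nat k) = (\<Prod>i<j. of_nat k - of_nat i) / fact j"
    by (simp add: binomial_poly_def poly_prod)
  also have "\<dots> = of_nat k gchoose j"
    by (simp add: gbinomial_prod_rev atLeast0LessThan)
  finally show ?thesis
    by (simp add: binomial_gbinomial)
qed

lemma coeff_0_binomial_poly: "coeff (binomial_poly j) 0 = (if j = 0 then 1 else 0)"
  using poly_binomial_poly[of j 0] by (cases j) (simp_all add: poly_0_coeff_0)

lemma prod_lessThan_minus_Suc: "(\<Prod>i<m. - of_nat (Suc i) :: 'k::{comm_ring_1,ring_char_0}) = (-1) ^ m * fact m"
  by (induction m) (simp_all add: algebra_simps)

lemma coeff_1_binomial_poly: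
  "coeff (binomial_poly j) 1 = (if j = 0 then 0 else (-1) ^ (j - 1) / of_nat j)"
proof (cases j)
  case (Suc m)
  define Q where "Q = (\<Prod>i<m. [:- of_nat (Suc i), 1:] :: 'a poly)"
  have "(\<Prod>i<j. [:- of_nat i, 1:]) = pCons 0 Q"
    unfolding Suc Q_def by (simp add: prod.lessThan_Suc_shift mult_pCons_left del: prod.lessThan_Suc)
  then have "coeff (binomial_poly j) 1 = coeff Q 0 / fact j"
    unfolding binomial_poly_def by simp
  also have "coeff Q 0 = (\<Prod>i<m. - of_nat (Suc i))"
    by (simp add: Q_def poly_0_coeff_0[symmetric] poly_prod del: of_nat_Suc)
  finally show ?thesis
    using Suc by (simp add: prod_lessThan_minus_Suc field_simps del: of_nat_Suc)
qed (simp add: binomial_poly_def)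

text \<open>For \<open>A [] = 0\<close>, \<open>k \<mapsto> (A + \<epsilon>)\<^sup>k w\<close> is the polynomial
\<open>\<Sum>\<^sub>j (k choose j) A\<^sup>j w\<close> in \<open>k\<close>; its linear coefficient is the logarithm.\<close>
definition conc_pow_poly :: "('a list \<Rightarrow> 'k::field_char_0) \<Rightarrow> 'a list \<Rightarrow> 'k poly" where
  "conc_pow_poly A w = (\<Sum>j\<le>length w. smult (conc_pow j A w) (binomial_poly j))"

lemma poly_conc_pow_poly:
  assumes "A [] = 0"
  shows "poly (conc_pow_poly A w) (of_nat k) = conc_pow k (\<lambda>z. A z + eps z) w"
proof -
  have "poly (conc_pow_poly A w) (of_nat k) = (\<Sum>j\<le>length w. of_nat (k choose j) * conc_pow j A w)"
    by (simp add: conc_pow_poly_def poly_sum poly_binomial_poly mult.commute)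
  also have "\<dots> = (\<Sum>j\<le>length w + k. of_nat (k choose j) * conc_pow j A w)"
    using assms by (intro sum.mono_neutral_left) (auto simp: conc_pow_eq_0)
  also have "\<dots> = (\<Sum>j\<le>k. of_nat (k choose j) * conc_pow j A w)"
    by (rule sum.mono_neutral_right) (auto simp: binomial_eq_0)
  finally show ?thesis
    by (simp add: conc_pow_add_eps)
qed

lemma coeff_0_conc_pow_poly: "coeff (conc_pow_poly A w) 0 = eps w"
proof -
  have "coeff (conc_pow_poly A w) 0 = (\<Sum>j\<le>length w. if j = 0 then conc_pow j A w else 0)"
    by (simp add: conc_pow_poly_def coeff_sum coeff_0_binomial_poly if_distrib[of "(*) _"] cong: if_cong)
  then show ?thesis
    by simp
qed

lemma coeff_1_conc_pow_poly: "coeff (conc_pow_poly (\<lambda>z. S z - eps z) w) 1 = log_ser S w"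
proof -
  have "{..length w} = insert 0 {1..length w}"
    by auto
  then show ?thesis
    by (simp add: conc_pow_poly_def coeff_sum coeff_1_binomial_poly[unfolded One_nat_def] log_ser_def
        mult.commute)
qed

lemma poly_eqI_of_nat:
  fixes p q :: "'k::field_char_0 poly"
  assumes "\<And>k. poly p (of_nat k) = poly q (of_nat k)"
  shows "p = q"
proof (rule ccontr)
  assume "p \<noteq> q"
  then have "finite {x. poly (p - q) x = 0}"
    by (intro poly_roots_finite) simp
  moreover have "range (of_nat :: nat \<Rightarrow> 'k) \<subseteq> {x. poly (p - q) x = 0}"
    using assms by auto
  ultimately have "finite (range (of_nat :: nat \<Rightarrow> 'k))"
    by (rule finite_subset[rotated])
  then show False
    by (metis finite_imageD inj_of_nat infinite_UNIV_nat)
qed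

lemma shuffle_eval_log_ser:
  fixes S :: "'a list \<Rightarrow> 'k::field_char_0"
  assumes S: "shuffle_character S" and "p \<noteq> []" "q \<noteq> []"
  shows "shuffle_eval (log_ser S) p q = 0"
proof -
  define A where "A = (\<lambda>z. S z - eps z)"
  let ?P = "conc_pow_poly A"
  have A: "A [] = 0" and SA: "(\<lambda>z. A z + eps z) = S"
    using S by (simp_all add: A_def shuffle_character_def eps_def)
  let ?F = "set_mset (shuffle_mset p q)"
  define Q where "Q = (\<Sum>z\<in>?F. smult (of_nat (count (shuffle_mset p q) z)) (?P z))"
  have "poly Q (of_nat k) = poly (?P p * ?P q) (of_nat k)" for k
  proof -
    have "poly Q (of_nat k) = shuffle_eval (conc_pow k S) p q"
      unfolding shuffle_eval_def
      by (subst sum_mset_eq_sum_count[of ?F]) (simp_all add: Q_def poly_sum poly_conc_pow_poly[of A, OF A] SA)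
    also have "\<dots> = conc_pow k S p * conc_pow k S q"
      using shuffle_character_conc_pow[OF S, of k] by (simp add: shuffle_character_def)
    finally show ?thesis
      by (simp add: poly_conc_pow_poly[of A, OF A] SA)
  qed
  then have "Q = ?P p * ?P q"
    by (rule poly_eqI_of_nat)
  moreover have "coeff Q 1 = shuffle_eval (log_ser S) p q"
    unfolding shuffle_eval_def
    by (subst sum_mset_eq_sum_count[of ?F]) (simp_all add: Q_def coeff_sum coeff_1_conc_pow_poly[unfolded One_nat_def] A_def)
  moreover have "coeff (?P p * ?P q) 1 = 0"
    using assms(2,3) by (simp add: coeff_mult coeff_0_conc_pow_poly eps_def)
  ultimately show ?thesis
    by simp
qed

lemma shuffle_primitive_on_log_ser:
  "shuffle_character S \<Longrightarrow> shuffle_primitive_on M (log_ser S)"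
  by (simp add: shuffle_primitive_on_def shuffle_eval_log_ser)

lemma supp_lin_subset:
  assumes "\<And>w. w \<in> supp p \<Longrightarrow> supp (f w) \<subseteq> P"
  shows "supp (lin f p) \<subseteq> P"
proof
  fix u assume "u \<in> supp (lin f p)"
  then obtain w where "w \<in> supp p" "p w * f w u \<noteq> 0"
    by (auto simp: supp_def lin_def elim!: sum.not_neutral_contains_not_neutral)
  then have "w \<in> supp p" "u \<in> supp (f w)"
    by (auto simp: supp_def)
  with assms show "u \<in> P"
    by blast
qed

lemma pair_lin:
  assumes "finite (supp p)" "\<And>w. w \<in> supp p \<Longrightarrow> finite (supp (f w))"
  shows "pair S (lin f p) = pair (\<lambda>w. pair S (f w)) p"
proof -
  let ?F = "\<Union>w\<in>supp p. supp (f w)"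
  have "finite ?F"
    using assms by simp
  have "pair S (lin f p) = (\<Sum>u\<in>?F. S u * lin f p u)"
    using \<open>finite ?F\<close> by (intro pair_eq_sum supp_lin_subset) auto
  also have "\<dots> = (\<Sum>w\<in>supp p. p w * (\<Sum>u\<in>?F. S u * f w u))"
    by (simp add: lin_def supp_def[symmetric] sum_distrib_left sum.swap[of _ ?F] mult_ac)
  also have "\<dots> = (\<Sum>w\<in>supp p. p w * pair S (f w))"
    using \<open>finite ?F\<close> by (intro sum.cong refl arg_cong2[where f = "(*)"] pair_eq_sum[symmetric]) auto
  finally show ?thesis
    by (simp add: pair_def supp_def mult.commute)
qed

lemma finite_supp_hoffman: "finite (supp (hoffman w :: word \<Rightarrow> 'k::field_char_0))"
proof (rule finite_subset)
  show "supp (hoffman w :: word \<Rightarrow> 'k) \<subseteq> (\<lambda>\<alpha>. contract \<alpha> w) ` comps (length w)"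
    by (auto simp: supp_def hoffman_def elim!: sum.not_neutral_contains_not_neutral split: if_splits)
qed (simp add: finite_comps)

lemma supp_lie_poly: "supp (lie_poly w :: word \<Rightarrow> 'k::comm_ring_1) \<subseteq> permutations_of_multiset (mset w)"
  by (auto simp: supp_def permutations_of_multiset_def dest: mset_eq_if_lie_poly_nonzero)

lemma pair_DS_hoffman_euler_lie:
  fixes x :: "nat \<Rightarrow> nat \<Rightarrow> 'k::field_char_0"
  assumes "ht w \<le> h"
  shows "pair (DS N x) (lin hoffman (lin euler_w (lie h w))) =
    (\<Sum>z\<in>permutations_of_multiset (mset w). lie_poly w z * log_ser (exp_prod x N) z)"
proof -
  let ?P = "permutations_of_multiset (mset w)"
  let ?p = "lie_poly w :: word \<Rightarrow> 'k"
  have supp_p: "supp ?p \<subseteq> ?P"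
    by (rule supp_lie_poly)
  have supp_r: "supp (lin euler_w ?p) \<subseteq> ?P"
  proof (rule supp_lin_subset)
    fix u assume "u \<in> supp ?p"
    then have "mset u = mset w"
      using supp_p by (auto simp: permutations_of_multiset_def)
    then show "supp (euler_w u :: word \<Rightarrow> 'k) \<subseteq> ?P"
      using supp_euler_w[of u] by simp
  qed
  have "finite (supp ?p)" "finite (supp (lin euler_w ?p))"
    using supp_p supp_r by (simp_all add: finite_subset)
  have "hoffman_adj (DS N x) = exp_prod x N"
    by (rule ext) (rule hoffman_adj_DS)
  have "pair (DS N x) (lin hoffman (lin euler_w ?p)) = pair (hoffman_adj (DS N x)) (lin euler_w ?p)"
    unfolding hoffman_adj_def
    by (rule pair_lin) (simp_all add: finite_supp_hoffman \<open>finite (supp (lin euler_w ?p))\<close>)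
  also have "\<dots> = pair (exp_prod x N) (lin euler_w ?p)"
    by (simp only: \<open>hoffman_adj (DS N x) = exp_prod x N\<close>)
  also have "\<dots> = pair (\<lambda>u. pair (exp_prod x N) (euler_w u)) ?p"
    by (rule pair_lin) (simp_all add: \<open>finite (supp ?p)\<close> finite_subset[OF supp_euler_w])
  also have "\<dots> = pair (log_ser (exp_prod x N)) ?p"
    by (simp add: pair_euler_w shuffle_character_exp_prod)
  also have "\<dots> = (\<Sum>z\<in>?P. lie_poly w z * log_ser (exp_prod x N) z)"
    by (simp add: pair_eq_sum[OF finite_permutations_of_multiset supp_p] mult.commute)
  finally show ?thesis
    using lie_eq_lie_poly[OF assms, where 'k = 'k] by simp
qed

lemma orthogonal_lie_iff_log_ser_vanishes:
  fixes S :: "'a list \<Rightarrow> 'k::field_char_0"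
  assumes "shuffle_character S" "w \<noteq> []"
  shows "(\<forall>u\<in>permutations_of_multiset (mset w).
      (\<Sum>z\<in>permutations_of_multiset (mset w). lie_poly u z * log_ser S z) = 0) \<longleftrightarrow>
    (\<forall>z\<in>permutations_of_multiset (mset w). log_ser S z = 0)"
proof
  assume orth: "\<forall>u\<in>permutations_of_multiset (mset w).
      (\<Sum>z\<in>permutations_of_multiset (mset w). lie_poly u z * log_ser S z) = 0"
  show "\<forall>z\<in>permutations_of_multiset (mset w). log_ser S z = 0"
  proof
    fix z assume "z \<in> permutations_of_multiset (mset w)"
    then have "mset z = mset w" "z \<noteq> []"
      using assms(2) by (auto simp: permutations_of_multiset_def)
    then show "log_ser S z = 0"
      using orth primitive_orthogonal_lie_eq_0[of z "log_ser S"]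
      by (simp add: shuffle_primitive_on_log_ser[OF assms(1)])
  qed
qed simp

lemma exp_prod_singleton: "exp_prod x N [I] = DS N x [I]"
  using hoffman_adj_DS[of N x "[I]"] by (simp add: hoffman_adj_eq_sum_comps comps_1)

lemma in_Ad_deg_eq_0: "in_Ad_deg d h v \<Longrightarrow> length w \<noteq> 1 \<Longrightarrow> v w = 0"
  unfolding in_Ad_deg_def by force

lemma permutation_of_word:
  assumes "is_word d w" "z \<in> permutations_of_multiset (mset w)"
  shows "is_word d z" "ht z = ht w" "length z = length w"
proof -
  have "mset z = mset w"
    using assms(2) by (simp add: permutations_of_multiset_def)
  then show "is_word d z" "ht z = ht w" "length z = length w"
    using assms(1) by (auto simp: is_word_def dest: mset_eq_setD mset_eq_length ht_eq_if_mset_eq)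
qed

lemma orthogonality_iff_log_vanishes:
  fixes x :: "nat \<Rightarrow> nat \<Rightarrow> 'k::field_char_0"
  shows "(\<forall>w. is_word d w \<and> ht w \<le> h \<and> 2 \<le> length w \<longrightarrow>
      pair (DS N x) (lin hoffman (lin euler_w (lie h w))) = 0) \<longleftrightarrow>
    (\<forall>w. is_word d w \<and> ht w \<le> h \<and> 2 \<le> length w \<longrightarrow> log_ser (exp_prod x N) w = 0)"
    (is "(\<forall>w. ?long w \<longrightarrow> _) \<longleftrightarrow> _")
proof (intro iffI allI impI)
  let ?L = "log_ser (exp_prod x N)"
  let ?P = "\<lambda>w. permutations_of_multiset (mset w)"
  fix w assume orth: "\<forall>w. ?long w \<longrightarrow> pair (DS N x) (lin hoffman (lin euler_w (lie h w))) = 0"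
    and w: "?long w"
  have "\<forall>u\<in>?P w. (\<Sum>z\<in>?P w. lie_poly u z * ?L z) = 0"
  proof
    fix u assume u: "u \<in> ?P w"
    then have "?long u" "?P u = ?P w"
      using w permutation_of_word[of d w u] by (auto simp: permutations_of_multiset_def)
    then show "(\<Sum>z\<in>?P w. lie_poly u z * ?L z) = 0"
      using orth pair_DS_hoffman_euler_lie[of u h N x] by auto
  qed
  moreover have "w \<noteq> []"
    using w by auto
  ultimately have "\<forall>z\<in>?P w. ?L z = 0"
    using orthogonal_lie_iff_log_ser_vanishes[OF shuffle_character_exp_prod[of x N]] by blast
  then show "?L w = 0"
    by (simp add: permutations_of_multisetI)
next
  let ?L = "log_ser (exp_prod x N)"
  let ?P = "\<lambda>w. permutations_of_multiset (mset w)"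
  fix w assume vanish: "\<forall>w. ?long w \<longrightarrow> ?L w = 0" and w: "?long w"
  have "\<forall>z\<in>?P w. ?L z = 0"
    using vanish w permutation_of_word[of d w] by auto
  with w show "pair (DS N x) (lin hoffman (lin euler_w (lie h w))) = 0"
    by (simp add: pair_DS_hoffman_euler_lie)
qed

lemma log_exp_prod_eq_iff:
  fixes x :: "nat \<Rightarrow> nat \<Rightarrow> 'k::field_char_0"
  assumes v: "in_Ad_deg d h v"
  shows "(\<forall>w. is_word d w \<and> ht w \<le> h \<longrightarrow> log_ser (exp_prod x N) w = v w) \<longleftrightarrow>
    (\<forall>I. is_letter d I \<and> size I \<le> h \<longrightarrow> DS N x [I] = v [I]) \<and>
    (\<forall>w. is_word d w \<and> ht w \<le> h \<and> 2 \<le> length w \<longrightarrow> log_ser (exp_prod x N) w = 0)"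
proof (intro iffI conjI allI impI)
  let ?L = "log_ser (exp_prod x N)"
  have singleton: "is_word d [I] \<and> ht [I] \<le> h \<longleftrightarrow> is_letter d I \<and> size I \<le> h" for I
    by (simp add: is_word_def ht_def)
  {
    assume matches: "\<forall>w. is_word d w \<and> ht w \<le> h \<longrightarrow> ?L w = v w"
    show "DS N x [I] = v [I]" if "is_letter d I \<and> size I \<le> h" for I
      using matches singleton that by (metis exp_prod_singleton log_ser_singleton)
    show "?L w = 0" if "is_word d w \<and> ht w \<le> h \<and> 2 \<le> length w" for w
      using matches that in_Ad_deg_eq_0[OF v, of w] by simp
  }
  fix w
  assume "(\<forall>I. is_letter d I \<and> size I \<le> h \<longrightarrow> DS N x [I] = v [I]) \<and>
    (\<forall>w. is_word d w \<and> ht w \<le> h \<and> 2 \<le> length w \<longrightarrow> ?L w = 0)"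
  then have letters: "\<And>I. is_letter d I \<and> size I \<le> h \<Longrightarrow> DS N x [I] = v [I]"
    and long: "\<And>w. is_word d w \<and> ht w \<le> h \<and> 2 \<le> length w \<Longrightarrow> ?L w = 0"
    by blast+
  assume w: "is_word d w \<and> ht w \<le> h"
  consider "w = []" | I where "w = [I]" | "2 \<le> length w"
    by (cases w rule: remdups_adj.cases) auto
  then show "?L w = v w"
  proof cases
    case 2
    then show ?thesis
      using w singleton letters by (simp add: exp_prod_singleton)
  qed (use w long in_Ad_deg_eq_0[OF v, of w] in simp_all)
qed

lemma reachability_conditions_iff:
  fixes v :: "'k::field_char_0 ser" and x :: "nat \<Rightarrow> nat \<Rightarrow> 'k"
  assumes "in_Ad_deg d h v"
  shows "((\<forall>I. is_letter d I \<and> size I \<le> h \<longrightarrow> DS N x [I] = v [I]) \<and>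
     (\<forall>w. is_word d w \<and> ht w \<le> h \<and> 2 \<le> length w \<longrightarrow>
        pair (DS N x) (lin hoffman (lin euler_w (lie h w))) = 0))
    \<longleftrightarrow> (\<forall>w. is_word d w \<and> ht w \<le> h \<longrightarrow> logh h (hoffman_adj (trunc h (DS N x))) w = v w)"
proof -
  have "(\<forall>w. is_word d w \<and> ht w \<le> h \<longrightarrow> logh h (hoffman_adj (trunc h (DS N x))) w = v w) \<longleftrightarrow>
      (\<forall>w. is_word d w \<and> ht w \<le> h \<longrightarrow> log_ser (exp_prod x N) w = v w)"
    using logh_hoffman_adj_trunc_DS[of d _ h N x] by auto
  then show ?thesis
    by (simp add: log_exp_prod_eq_iff[OF assms] orthogonality_iff_log_vanishes)
qed

theorem lemma5p3:
  fixes v :: "'k::field_char_0 ser" and d h N :: nat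
  assumes alg_closed: "\<forall>p :: 'k poly. 0 < degree p \<longrightarrow> (\<exists>z. poly p z = 0)"
    and v_in: "in_Ad_deg d h v"
  shows "reachable d h N v \<longleftrightarrow>
    (\<exists>x. \<forall>w. is_word d w \<and> ht w \<le> h \<longrightarrow>
        logh h (hoffman_adj (trunc h (DS N x))) w = v w)"
  unfolding reachable_def using reachability_conditions_iff[OF v_in] by blast

end
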